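(* Let $(R,\mathfrak{m},k)$ be a commutative Noetherian local ring and let $(\mathbf{F},\partial)$ be a minimal Tate resolution of $k$ over $R$. Then the linear part $\operatorname{lin}^R(\mathbf{F})$ has a structure of (graded commutative) DG algebra over $R^{\mathsf g}$ induced by that of $\mathbf{F}$: for $x\in\mathfrak{m}^iF_n$ and $y\in\mathfrak{m}^jF_m$ with classes $x^*\in\mathfrak{m}^iF_n/\mathfrak{m}^{i+1}F_n$ and $y^*\in\mathfrak{m}^jF_m/\mathfrak{m}^{j+1}F_m$, the product $x^*y^*$ is the class of $xy$ in $\mathfrak{m}^{i+j}F_{n+m}/\mathfrak{m}^{i+j+1}F_{n+m}$.
   Context: A (graded commutative) DG algebra over a commutative ring $S$ is a non-negative $S$-complex $(\mathbf{D},\partial)$ with a morphism of complexes $\mathbf{D}\otimes_S\mathbf{D}\to\mathbf{D}$, $a\otimes b\mapsto ab$, which is unital, associative, and graded commutative ($ab=(-1)^{|a||b|}ba$, and $a^2=0$ when $|a|$ is odd); being a morphism of complexes amounts to the Leibniz rule $\partial(ab)=\partial(a)b+(-1)^{|a|}a\partial(b)$. A minimal Tate resolution of $k$ is a minimal free resolution $\mathbf{F}$ of $k$ over $R$ (finitely generated free modules, $\partial(F_i)\subseteq\mathfrak{m}F_{i-1}$) carrying a DG algebra structure over $R$. $R^{\mathsf g}=\bigoplus_{i\ge0}\mathfrak{m}^i/\mathfrak{m}^{i+1}$. The linear part $\operatorname{lin}^R(\mathbf{F})$ is the associated graded complex of the filtration $(\mathfrak{F}^p\mathbf{F})_i=\mathfrak{m}^{p-i}F_i$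 ($\mathfrak{m}^j=R$ for $j\le0$); it is a complex of graded free $R^{\mathsf g}$-modules with $\operatorname{lin}^R_n(\mathbf{F})=F_n^{\mathsf g}(-n)$, $F_n^{\mathsf g}=\bigoplus_{i\ge0}\mathfrak{m}^iF_n/\mathfrak{m}^{i+1}F_n$, and differential sending the class of $x\in\mathfrak{m}^iF_n$ to the class of $\partial(x)$ in $\mathfrak{m}^{i+1}F_{n-1}/\mathfrak{m}^{i+2}F_{n-1}$. *)

theory Defs
  imports "HOL-Algebra.Algebra"
begin

definition linear_map ::
  "('s,'c) ring_scheme \<Rightarrow> ('s,'a) module \<Rightarrow> ('s,'b) module \<Rightarrow> ('a \<Rightarrow> 'b) \<Rightarrow> bool" where
  "linear_map S M N f \<longleftrightarrow>
     f \<in> carrier M \<rightarrow> carrier N \<and>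
     (\<forall>x\<in>carrier M. \<forall>y\<in>carrier M. f (x \<oplus>\<^bsub>M\<^esub> y) = f x \<oplus>\<^bsub>N\<^esub> f y) \<and>
     (\<forall>s\<in>carrier S. \<forall>x\<in>carrier M. f (s \<odot>\<^bsub>M\<^esub> x) = s \<odot>\<^bsub>N\<^esub> f x)"

definition gen_submodule :: "('s,'c) ring_scheme \<Rightarrow> ('s,'a) module \<Rightarrow> 'a set \<Rightarrow> 'a set" where
  "gen_submodule S M A = \<Inter>{H. submodule H S M \<and> A \<subseteq> H}"

definition ideal_smult :: "('s,'c) ring_scheme \<Rightarrow> ('s,'a) module \<Rightarrow> 's set \<Rightarrow> 'a set \<Rightarrow> 'a set" where
  "ideal_smult S M I N = gen_submodule S M {s \<odot>\<^bsub>M\<^esub> x | s x. s \<in> I \<and> x \<in> N}"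

fun mpow_mod :: "('s,'c) ring_scheme \<Rightarrow> ('s,'a) module \<Rightarrow> 's set \<Rightarrow> nat \<Rightarrow> 'a set" where
  "mpow_mod S M I 0 = carrier M"
| "mpow_mod S M I (Suc i) = ideal_smult S M I (mpow_mod S M I i)"

definition ring_module :: "('r,'c) ring_scheme \<Rightarrow> ('r,'r) module" where
  "ring_module R = \<lparr>partial_object.carrier = carrier R, monoid.mult = monoid.mult R, monoid.one = monoid.one R, ring.zero = ring.zero R,
                    ring.add = ring.add R, smult = monoid.mult R\<rparr>"

definition residue_module :: "('r,'c) ring_scheme \<Rightarrow> 'r set \<Rightarrow> ('r, 'r set) module" where
  "residue_module R m = \<lparr>partial_object.carrier = carrier (R Quot m), monoid.mult = monoid.mult (R Quot m),
      monoid.one = monoid.one (R Quot m), ring.zero = ring.zero (R Quot m), ring.add = ring.add (R Quot m),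
      smult = (\<lambda>r C. (a_r_coset R m r) \<otimes>\<^bsub>R Quot m\<^esub> C)\<rparr>"

definition cls :: "('s,'a) module \<Rightarrow> 'a set \<Rightarrow> 'a \<Rightarrow> 'a set" where
  "cls M N x = (\<lambda>z. x \<oplus>\<^bsub>M\<^esub> z) ` N"

definition fin_free :: "('s,'c) ring_scheme \<Rightarrow> ('s,'a) module \<Rightarrow> bool" where
  "fin_free S M \<longleftrightarrow> (\<exists>B. finite B \<and> B \<subseteq> carrier M \<and>
     (\<forall>x\<in>carrier M. \<exists>!c. c \<in> B \<rightarrow>\<^sub>E carrier S \<and>
         x = finsum M (\<lambda>b. c b \<odot>\<^bsub>M\<^esub> b) B))"

text \<open>A non-negative S-complex (D n, d n) with d (Suc n) : D (Suc n) -> D n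
  (d 0 is the zero map to D(-1) = 0 and carries no data), with a product
  mu n m : D n x D m -> D (n+m) which is S-bilinear, unital (unit e in D 0),
  associative, graded commutative, squares odd elements to 0, and satisfies
  the Leibniz rule (i.e. is a morphism of complexes D (x) D -> D).\<close>

definition sgn_mod :: "('s,'a) module \<Rightarrow> nat \<Rightarrow> 'a \<Rightarrow> 'a" where
  "sgn_mod M k x = (if even k then x else \<ominus>\<^bsub>M\<^esub> x)"

definition dg_algebra ::
  "('s,'c) ring_scheme \<Rightarrow> (nat \<Rightarrow> ('s,'a) module) \<Rightarrow> (nat \<Rightarrow> 'a \<Rightarrow> 'a)
    \<Rightarrow> (nat \<Rightarrow> nat \<Rightarrow> 'a \<Rightarrow> 'a \<Rightarrow> 'a) \<Rightarrow> 'a \<Rightarrow> bool" where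
  "dg_algebra S D d mu e \<longleftrightarrow>
     cring S \<and> (\<forall>n. module S (D n)) \<and>
     (\<forall>n. linear_map S (D (Suc n)) (D n) (d (Suc n))) \<and>
     (\<forall>n. \<forall>x\<in>carrier (D (Suc (Suc n))). d (Suc n) (d (Suc (Suc n)) x) = \<zero>\<^bsub>D n\<^esub>) \<and>
     (\<forall>n m. \<forall>x\<in>carrier (D n). \<forall>y\<in>carrier (D m). mu n m x y \<in> carrier (D (n+m))) \<and>
     (\<forall>n m. \<forall>x\<in>carrier (D n). \<forall>x'\<in>carrier (D n). \<forall>y\<in>carrier (D m).
        mu n m (x \<oplus>\<^bsub>D n\<^esub> x') y = mu n m x y \<oplus>\<^bsub>D (n+m)\<^esub> mu n m x' y) \<and>
     (\<forall>n m. \<forall>x\<in>carrier (D n). \<forall>y\<in>carrier (D m). \<forall>y'\<in>carrier (D m).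
        mu n m x (y \<oplus>\<^bsub>D m\<^esub> y') = mu n m x y \<oplus>\<^bsub>D (n+m)\<^esub> mu n m x y') \<and>
     (\<forall>n m. \<forall>s\<in>carrier S. \<forall>x\<in>carrier (D n). \<forall>y\<in>carrier (D m).
        mu n m (s \<odot>\<^bsub>D n\<^esub> x) y = s \<odot>\<^bsub>D (n+m)\<^esub> mu n m x y \<and>
        mu n m x (s \<odot>\<^bsub>D m\<^esub> y) = s \<odot>\<^bsub>D (n+m)\<^esub> mu n m x y) \<and>
     e \<in> carrier (D 0) \<and>
     (\<forall>n. \<forall>x\<in>carrier (D n). mu 0 n e x = x \<and> mu n 0 x e = x) \<and>
     (\<forall>n m k. \<forall>x\<in>carrier (D n). \<forall>y\<in>carrier (D m). \<forall>z\<in>carrier (D k).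
        mu (n+m) k (mu n m x y) z = mu n (m+k) x (mu m k y z)) \<and>
     (\<forall>n m. \<forall>x\<in>carrier (D n). \<forall>y\<in>carrier (D m).
        mu n m x y = sgn_mod (D (n+m)) (n*m) (mu m n y x)) \<and>
     (\<forall>n. odd n \<longrightarrow> (\<forall>x\<in>carrier (D n). mu n n x x = \<zero>\<^bsub>D (n+n)\<^esub>)) \<and>
     (\<forall>n m. 0 < n + m \<longrightarrow> (\<forall>x\<in>carrier (D n). \<forall>y\<in>carrier (D m).
        d (n+m) (mu n m x y) =
          (if n = 0 then \<zero>\<^bsub>D (n+m-1)\<^esub> else mu (n-1) m (d n x) y)
          \<oplus>\<^bsub>D (n+m-1)\<^esub>
          (if m = 0 then \<zero>\<^bsub>D (n+m-1)\<^esub> else sgn_mod (D (n+m-1)) n (mu n (m-1) x (d m y)))))"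

definition noetherian_local :: "('r,'c) ring_scheme \<Rightarrow> 'r set \<Rightarrow> bool" where
  "noetherian_local R m \<longleftrightarrow> cring R \<and> noetherian_ring R \<and> maximalideal m R \<and>
     (\<forall>I. maximalideal I R \<longrightarrow> I = m)"

definition minimal_free_resolution ::
  "('r,'c) ring_scheme \<Rightarrow> 'r set \<Rightarrow> (nat \<Rightarrow> ('r,'f) module) \<Rightarrow> (nat \<Rightarrow> 'f \<Rightarrow> 'f) \<Rightarrow> bool" where
  "minimal_free_resolution R m F d \<longleftrightarrow>
     (\<forall>n. module R (F n) \<and> fin_free R (F n)) \<and>
     (\<forall>n. linear_map R (F (Suc n)) (F n) (d (Suc n))) \<and>
     (\<forall>n. \<forall>x\<in>carrier (F (Suc (Suc n))). d (Suc n) (d (Suc (Suc n)) x) = \<zero>\<^bsub>F n\<^esub>) \<and>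
     (\<forall>n. {x\<in>carrier (F (Suc n)). d (Suc n) x = \<zero>\<^bsub>F n\<^esub>}
            = d (Suc (Suc n)) ` carrier (F (Suc (Suc n)))) \<and>
     (\<exists>eps. linear_map R (F 0) (residue_module R m) eps \<and>
        eps ` carrier (F 0) = carrier (residue_module R m) \<and>
        {x\<in>carrier (F 0). eps x = \<zero>\<^bsub>residue_module R m\<^esub>} = d 1 ` carrier (F 1)) \<and>
     (\<forall>n. d (Suc n) ` carrier (F (Suc n)) \<subseteq> mpow_mod R (F n) m 1)"

definition minimal_tate_resolution ::
  "('r,'c) ring_scheme \<Rightarrow> 'r set \<Rightarrow> (nat \<Rightarrow> ('r,'f) module) \<Rightarrow> (nat \<Rightarrow> 'f \<Rightarrow> 'f)
     \<Rightarrow> (nat \<Rightarrow> nat \<Rightarrow> 'f \<Rightarrow> 'f \<Rightarrow> 'f) \<Rightarrow> 'f \<Rightarrow> bool" where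
  "minimal_tate_resolution R m F d mu e \<longleftrightarrow>
     minimal_free_resolution R m F d \<and> dg_algebra R F d mu e"

text \<open>Elements of an associated graded module gr_I(M) = sum_i I^i M / I^(i+1) M are
  represented as functions i \<mapsto> (class in I^i M / I^(i+1) M), almost all zero.\<close>

definition gr_carrier :: "('s,'c) ring_scheme \<Rightarrow> ('s,'a) module \<Rightarrow> 's set \<Rightarrow> (nat \<Rightarrow> 'a set) set" where
  "gr_carrier S M I = {c. (\<forall>i. \<exists>x\<in>mpow_mod S M I i. c i = cls M (mpow_mod S M I (Suc i)) x) \<and>
                          finite {i. c i \<noteq> cls M (mpow_mod S M I (Suc i)) \<zero>\<^bsub>M\<^esub>}}"

definition gr_rep :: "('s,'c) ring_scheme \<Rightarrow> ('s,'a) module \<Rightarrow> 's set \<Rightarrow> (nat \<Rightarrow> 'a set) \<Rightarrow> nat \<Rightarrow> 'a" where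
  "gr_rep S M I c i = (SOME x. x \<in> mpow_mod S M I i \<and> c i = cls M (mpow_mod S M I (Suc i)) x)"

definition gr_cls :: "('s,'c) ring_scheme \<Rightarrow> ('s,'a) module \<Rightarrow> 's set \<Rightarrow> nat \<Rightarrow> 'a \<Rightarrow> (nat \<Rightarrow> 'a set)" where
  "gr_cls S M I i x = (\<lambda>j. cls M (mpow_mod S M I (Suc j)) (if j = i then x else \<zero>\<^bsub>M\<^esub>))"

definition gr_add :: "('s,'c) ring_scheme \<Rightarrow> ('s,'a) module \<Rightarrow> 's set
    \<Rightarrow> (nat \<Rightarrow> 'a set) \<Rightarrow> (nat \<Rightarrow> 'a set) \<Rightarrow> (nat \<Rightarrow> 'a set)" where
  "gr_add S M I a b = (\<lambda>k. cls M (mpow_mod S M I (Suc k)) (gr_rep S M I a k \<oplus>\<^bsub>M\<^esub> gr_rep S M I b k))"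

definition assoc_graded :: "('r,'c) ring_scheme \<Rightarrow> 'r set \<Rightarrow> (nat \<Rightarrow> 'r set) ring" where
  "assoc_graded R m =
     (let RM = ring_module R in
     \<lparr>partial_object.carrier = gr_carrier R RM m,
      monoid.mult = (\<lambda>a b. \<lambda>k. cls RM (mpow_mod R RM m (Suc k))
                 (finsum R (\<lambda>i. gr_rep R RM m a i \<otimes>\<^bsub>R\<^esub> gr_rep R RM m b (k - i)) {..k})),
      monoid.one = gr_cls R RM m 0 \<one>\<^bsub>R\<^esub>,
      ring.zero = gr_cls R RM m 0 \<zero>\<^bsub>R\<^esub>,
      ring.add = gr_add R RM m\<rparr>)"

text \<open>The components lin_n(F) = F_n^g(-n) of the linear part, as R^g-modules.\<close>
definition lin_mod :: "('r,'c) ring_scheme \<Rightarrow> 'r set \<Rightarrow> (nat \<Rightarrow> ('r,'f) module)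
    \<Rightarrow> nat \<Rightarrow> (nat \<Rightarrow> 'r set, nat \<Rightarrow> 'f set) module" where
  "lin_mod R m F n =
     \<lparr>partial_object.carrier = gr_carrier R (F n) m,
      monoid.mult = (\<lambda>a b. undefined),
      monoid.one = undefined,
      ring.zero = gr_cls R (F n) m 0 \<zero>\<^bsub>F n\<^esub>,
      ring.add = gr_add R (F n) m,
      smult = (\<lambda>a c. \<lambda>k. cls (F n) (mpow_mod R (F n) m (Suc k))
                 (finsum (F n) (\<lambda>i. gr_rep R (ring_module R) m a i \<odot>\<^bsub>F n\<^esub> gr_rep R (F n) m c (k - i)) {..k}))\<rparr>"

text \<open>The differential of lin(F): the class of x in m^i F_n goes to the class of
  d x in m^(i+1) F_(n-1) / m^(i+2) F_(n-1).\<close>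
definition lin_diff :: "('r,'c) ring_scheme \<Rightarrow> 'r set \<Rightarrow> (nat \<Rightarrow> ('r,'f) module)
    \<Rightarrow> (nat \<Rightarrow> 'f \<Rightarrow> 'f) \<Rightarrow> nat \<Rightarrow> (nat \<Rightarrow> 'f set) \<Rightarrow> (nat \<Rightarrow> 'f set)" where
  "lin_diff R m F d n c =
     (case n of 0 \<Rightarrow> c
      | Suc n' \<Rightarrow> (\<lambda>k. cls (F n') (mpow_mod R (F n') m (Suc k))
           (if k = 0 then \<zero>\<^bsub>F n'\<^esub> else d (Suc n') (gr_rep R (F (Suc n')) m c (k - 1)))))"

end

theory Submission
  imports Defs
begin

text \<open>
  An element of gr_I M = \<Oplus>_i I^i M / I^(i+1) M is represented by a sequence f with
  f i \<in> I^i M for all i and f i \<in> I^(i+1) M for large i; two sequences represent the same element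
  iff f i - g i \<in> I^(i+1) M for all i. An S-bilinear map \<beta> sends I^i A \<times> I^j B into I^(i+j) P,
  so the convolution (f * g) t = \<Sum>_{i \<le> t} \<beta> (f i) (g (t - i)) descends to a well-defined
  product on classes. Applied to the multiplication of R, the scalar multiplications of the F_n and
  the products of F, it yields R^g, the R^g-modules lin_n(F) and the product of lin(F); each DG
  algebra identity of F holds termwise for the convolutions and therefore for the classes. The
  differential of lin(F) acts on representatives as d shifted by one filtration degree, which
  respects the filtration because minimality gives d(I^i F) \<subseteq> I^(i+1) F; the Leibniz rule of d
  then transfers to the shifted convolutions.
\<close>

lemma gen_submodule_least: "submodule H S M \<Longrightarrow> A \<subseteq> H \<Longrightarrow> gen_submodule S M A \<subseteq> H"
  unfolding gen_submodule_def by blast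

lemma gen_submodule_incl: "A \<subseteq> gen_submodule S M A"
  unfolding gen_submodule_def by blast

lemma submodule_zero_closed: "submodule H S M \<Longrightarrow> \<zero>\<^bsub>M\<^esub> \<in> H"
  using subgroup.one_closed[OF submodule.axioms(1)] by simp

lemma submodule_gen_submodule:
  assumes M: "module S M" and A: "A \<subseteq> carrier M"
  shows "submodule (gen_submodule S M A) S M"
proof -
  interpret module S M by (fact M)
  let ?H = "{H. submodule H S M \<and> A \<subseteq> H}"
  have "carrier M \<in> ?H" using carrier_is_submodule A by auto
  then show ?thesis
    unfolding gen_submodule_def
    by (intro submoduleI) (auto intro: submoduleE(3-5) submodule_zero_closed)
qed

lemma abelian_group_homI_additive:
  assumes "abelian_group G" "abelian_group H"
    and "\<And>x. x \<in> carrier G \<Longrightarrow> h x \<in> carrier H"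
    and "\<And>x y. x \<in> carrier G \<Longrightarrow> y \<in> carrier G \<Longrightarrow> h (x \<oplus>\<^bsub>G\<^esub> y) = h x \<oplus>\<^bsub>H\<^esub> h y"
  shows "abelian_group_hom G H h"
  using assms
  by (intro abelian_group_homI group_hom.intro group_hom_axioms.intro homI)
     (auto intro: abelian_group.a_group)

lemma abelian_group_hom_id: "abelian_group G \<Longrightarrow> abelian_group_hom G G (\<lambda>x. x)"
  by (rule abelian_group_homI_additive) auto

lemma abelian_group_hom_a_inv: "abelian_group G \<Longrightarrow> abelian_group_hom G G (a_inv G)"
  by (rule abelian_group_homI_additive) (auto simp: abelian_group.minus_add abelian_group.a_inv_closed)

lemma linear_map_abelian_group_hom:
  "module S M \<Longrightarrow> module S N \<Longrightarrow> linear_map S M N f \<Longrightarrow> abelian_group_hom M N f"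
  unfolding linear_map_def by (intro abelian_group_homI_additive) (auto dest: module.axioms(2))

context abelian_group_hom
begin

lemma hom_minus: "x \<in> carrier G \<Longrightarrow> y \<in> carrier G \<Longrightarrow> h (x \<ominus>\<^bsub>G\<^esub> y) = h x \<ominus>\<^bsub>H\<^esub> h y"
  by (simp add: a_minus_def)

lemma hom_finsum: "f \<in> A \<rightarrow> carrier G \<Longrightarrow> h (finsum G f A) = finsum H (\<lambda>i. h (f i)) A"
proof (induction A rule: infinite_finite_induct)
  case (insert x A)
  then show ?case by (simp add: G.finsum_insert H.finsum_insert Pi_iff)
qed simp_all

end

lemma submodule_vimage_linear_map:
  assumes M: "module S M" and N: "module S N" and f: "linear_map S M N f"
    and H: "submodule H S N"
  shows "submodule {x \<in> carrier M. f x \<in> H} S M"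
proof -
  interpret M: module S M by fact
  interpret N: module S N by fact
  interpret f: abelian_group_hom M N f by (rule linear_map_abelian_group_hom[OF M N f])
  show ?thesis
    using f N.submoduleE[OF H] submodule_zero_closed[OF H]
    by (intro M.submoduleI) (auto simp: linear_map_def)
qed

context abelian_group
begin

lemma a_inv_zero [simp]: "\<ominus> \<zero> = \<zero>"
  by (rule minus_equality) simp_all

lemma finsum_diff:
  assumes "f \<in> A \<rightarrow> carrier G" "g \<in> A \<rightarrow> carrier G"
  shows "(\<Oplus>i\<in>A. f i \<ominus> g i) = finsum G f A \<ominus> finsum G g A"
  using assms
proof (induction A rule: infinite_finite_induct)
  case (insert x A)
  then have "f x \<in> carrier G" "g x \<in> carrier G" "finsum G f A \<in> carrier G" "finsum G g A \<in> carrier G"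
    by (auto intro: finsum_closed)
  with insert show ?case by (simp add: finsum_insert Pi_iff a_minus_def minus_add a_ac)
qed (simp_all add: a_minus_def)

lemma finsum_triangle_swap:
  assumes Z: "\<And>i j. Z i j \<in> carrier G"
  shows "(\<Oplus>i\<in>{..t::nat}. \<Oplus>j\<in>{..i}. Z i j) = (\<Oplus>j\<in>{..t}. \<Oplus>l\<in>{..t - j}. Z (j + l) j)"
proof (induction t)
  case 0
  then show ?case using Z by (simp add: Pi_iff)
next
  case (Suc t)
  have peel: "(\<Oplus>l\<in>{..Suc t - j}. Z (j + l) j) = Z (Suc t) j \<oplus> (\<Oplus>l\<in>{..t - j}. Z (j + l) j)"
    if "j \<le> t" for j
    using that Z by (simp add: Suc_diff_le Pi_iff)
  have "(\<Oplus>j\<in>{..Suc t}. \<Oplus>l\<in>{..Suc t - j}. Z (j + l) j)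
      = Z (Suc t) (Suc t) \<oplus> (\<Oplus>j\<in>{..t}. Z (Suc t) j \<oplus> (\<Oplus>l\<in>{..t - j}. Z (j + l) j))"
    using Z peel by (simp add: Pi_iff finsum_closed cong: finsum_cong)
  also have "\<dots> = (\<Oplus>j\<in>{..Suc t}. Z (Suc t) j) \<oplus> (\<Oplus>j\<in>{..t}. \<Oplus>l\<in>{..t - j}. Z (j + l) j)"
    using Z by (simp add: finsum_addf Pi_iff finsum_closed a_assoc)
  finally show ?case using Suc Z by (simp add: Pi_iff finsum_closed)
qed

lemma finsum_reflect:
  assumes "f \<in> {..t::nat} \<rightarrow> carrier G"
  shows "(\<Oplus>i\<in>{..t}. f (t - i)) = (\<Oplus>i\<in>{..t}. f i)"
proof -
  have "(\<lambda>i. t - i) ` {..t} = {..t}"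
    by (auto simp: image_iff) (metis atMost_iff diff_diff_cancel diff_le_self)
  moreover have "inj_on (\<lambda>i. t - i) {..t}"
    by (auto simp: inj_on_def)
  ultimately show ?thesis
    using finsum_reindex[of f "\<lambda>i. t - i" "{..t}"] assms by simp
qed

lemma finsum_antisym_zero:
  fixes Z :: "nat \<Rightarrow> 'a"
  assumes Z: "\<And>i. Z i \<in> carrier G"
    and anti: "\<And>i. i \<in> {a..b} \<Longrightarrow> Z (a + b - i) = \<ominus> Z i"
    and mid: "\<And>i. i \<in> {a..b} \<Longrightarrow> 2 * i = a + b \<Longrightarrow> Z i = \<zero>"
  shows "finsum G Z {a..b} = \<zero>"
  using anti mid
proof (induction "b - a" arbitrary: a b rule: less_induct)
  case less
  show ?case
  proof (cases "a < b")
    case False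
    then have "{a..b} = {} \<or> (a = b \<and> {a..b} = {a})" by auto
    then show ?thesis using less.prems(2)[of a] Z by auto
  next
    case True
    have "finsum G Z {Suc a..b - 1} = \<zero>"
      using True less.prems by (intro less.hyps) auto
    moreover have "{a..b} = insert a (insert b {Suc a..b - 1})" using True by auto
    ultimately show ?thesis
      using True Z less.prems(1)[of a] by (simp add: finsum_insert r_neg)
  qed
qed

end

lemma ring_module_simps [simp]:
  "carrier (ring_module S) = carrier S"
  "ring.add (ring_module S) = ring.add S"
  "ring.zero (ring_module S) = ring.zero S"
  "smult (ring_module S) = monoid.mult S"
  "monoid.mult (ring_module S) = monoid.mult S"
  "monoid.one (ring_module S) = monoid.one S"
  by (simp_all add: ring_module_def)

lemma module_ring_module:
  assumes "cring S"
  shows "module S (ring_module S)"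
proof -
  interpret cring S by fact
  have "abelian_group (ring_module S)"
    by (rule abelian_groupI) (auto simp: a_ac l_neg intro: a_inv_closed)
  then show ?thesis
    by (rule moduleI[OF assms]) (auto simp: l_distr r_distr m_assoc)
qed

lemma finsum_ring_module [simp]: "finsum (ring_module S) f A = finsum S f A"
  by (simp add: finsum_def finprod_def)

section \<open>The \<open>I\<close>-adic filtration\<close>

declare mpow_mod.simps(2) [simp del]

locale filtered_module = module S M
  for S :: "('s, 'c) ring_scheme" and M :: "('s, 'a) module" +
  fixes I :: "'s set"
  assumes ideal_subset: "I \<subseteq> carrier S"
begin

abbreviation N :: "nat \<Rightarrow> 'a set" where "N i \<equiv> mpow_mod S M I i"

lemma submodule_mpow: "submodule (N i) S M"
proof (induction i)
  case (Suc i)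
  have "{s \<odot>\<^bsub>M\<^esub> x | s x. s \<in> I \<and> x \<in> N i} \<subseteq> carrier M"
    using submoduleE(1,4)[OF Suc] ideal_subset by blast
  then show ?case
    unfolding mpow_mod.simps ideal_smult_def by (rule submodule_gen_submodule[OF module_axioms])
qed (simp add: carrier_is_submodule)

lemma mpow_in_carrier: "x \<in> N i \<Longrightarrow> x \<in> carrier M"
  using submoduleE(1)[OF submodule_mpow] by blast

lemma mpow_zero [simp]: "\<zero>\<^bsub>M\<^esub> \<in> N i"
  by (rule submodule_zero_closed[OF submodule_mpow])

lemma mpow_add: "x \<in> N i \<Longrightarrow> y \<in> N i \<Longrightarrow> x \<oplus>\<^bsub>M\<^esub> y \<in> N i"
  by (rule submoduleE(5)[OF submodule_mpow])

lemma mpow_a_inv: "x \<in> N i \<Longrightarrow> \<ominus>\<^bsub>M\<^esub> x \<in> N i"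
  by (rule submoduleE(3)[OF submodule_mpow])

lemma mpow_finsum: "g \<in> A \<rightarrow> N i \<Longrightarrow> finsum M g A \<in> N i"
proof (induction A rule: infinite_finite_induct)
  case (insert x A)
  then have "g \<in> A \<rightarrow> carrier M" "g x \<in> carrier M" using mpow_in_carrier by auto
  with insert show ?case by (simp add: finsum_insert mpow_add)
qed simp_all

lemma smult_mpow_Suc: "s \<in> I \<Longrightarrow> x \<in> N i \<Longrightarrow> s \<odot>\<^bsub>M\<^esub> x \<in> N (Suc i)"
  unfolding mpow_mod.simps ideal_smult_def by (rule subsetD[OF gen_submodule_incl]) auto

lemma mpow_Suc_subsetI:
  assumes "submodule H S M" and "\<And>s x. s \<in> I \<Longrightarrow> x \<in> N i \<Longrightarrow> s \<odot>\<^bsub>M\<^esub> x \<in> H"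
  shows "N (Suc i) \<subseteq> H"
  unfolding mpow_mod.simps ideal_smult_def by (rule gen_submodule_least) (use assms in auto)

end

lemma filtered_moduleI: "module S M \<Longrightarrow> I \<subseteq> carrier S \<Longrightarrow> filtered_module S M I"
  by (simp add: filtered_module_def filtered_module_axioms_def)

lemma linear_map_mpow:
  assumes M: "module S M" and N: "module S N" and I: "I \<subseteq> carrier S"
    and f: "linear_map S M N f" and base: "f ` carrier M \<subseteq> mpow_mod S N I k"
  shows "x \<in> mpow_mod S M I i \<Longrightarrow> f x \<in> mpow_mod S N I (i + k)"
proof (induction i arbitrary: x)
  case 0
  then show ?case using base by auto
next
  case (Suc i)
  interpret M: filtered_module S M I by (rule filtered_moduleI[OF M I])
  interpret N: filtered_module S N I by (rule filtered_moduleI[OF N I])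
  have "mpow_mod S M I (Suc i) \<subseteq> {x \<in> carrier M. f x \<in> mpow_mod S N I (Suc i + k)}"
  proof (rule M.mpow_Suc_subsetI)
    show "submodule {x \<in> carrier M. f x \<in> mpow_mod S N I (Suc i + k)} S M"
      by (rule submodule_vimage_linear_map[OF M N f N.submodule_mpow])
    fix s x assume "s \<in> I" "x \<in> mpow_mod S M I i"
    then show "s \<odot>\<^bsub>M\<^esub> x \<in> {x \<in> carrier M. f x \<in> mpow_mod S N I (Suc i + k)}"
      using f I Suc.IH N.smult_mpow_Suc M.mpow_in_carrier by (auto simp: linear_map_def)
  qed
  then show ?case using Suc.prems by blast
qed

lemma cls_eq_iff:
  assumes M: "module S M" and H: "submodule H S M"
    and x: "x \<in> carrier M" and y: "y \<in> carrier M"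
  shows "cls M H x = cls M H y \<longleftrightarrow> x \<ominus>\<^bsub>M\<^esub> y \<in> H"
proof -
  interpret module S M by fact
  interpret abelian_subgroup H M
    by (rule abelian_subgroupI3[OF additive_subgroup.intro[OF submodule.axioms(1)[OF H]]])
       (rule abelian_group_axioms)
  have coset: "cls M H z = H +>\<^bsub>M\<^esub> z" if "z \<in> carrier M" for z
    using that a_subset by (force simp: cls_def a_r_coset_def' a_comm)
  have "H +>\<^bsub>M\<^esub> x = H +>\<^bsub>M\<^esub> y \<longleftrightarrow> x \<oplus>\<^bsub>M\<^esub> \<ominus>\<^bsub>M\<^esub> y \<in> H"
    using x y a_rcos_self a_rcos_module_imp a_rcos_module_rev a_repr_independence'
    by metis
  then show ?thesis using x y by (simp add: coset a_minus_def)
qed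

section \<open>Associated graded modules via representative sequences\<close>

definition seq_cls :: "('s, 'c) ring_scheme \<Rightarrow> ('s, 'a) module \<Rightarrow> 's set \<Rightarrow> (nat \<Rightarrow> 'a) \<Rightarrow> nat \<Rightarrow> 'a set"
  where "seq_cls S M I f = (\<lambda>i. cls M (mpow_mod S M I (Suc i)) (f i))"

definition graded_seq :: "('s, 'c) ring_scheme \<Rightarrow> ('s, 'a) module \<Rightarrow> 's set \<Rightarrow> (nat \<Rightarrow> 'a) \<Rightarrow> bool"
  where "graded_seq S M I f \<longleftrightarrow>
    (\<forall>i. f i \<in> mpow_mod S M I i) \<and> (\<exists>K. \<forall>i\<ge>K. f i \<in> mpow_mod S M I (Suc i))"

definition graded_equiv ::
  "('s, 'c) ring_scheme \<Rightarrow> ('s, 'a) module \<Rightarrow> 's set \<Rightarrow> (nat \<Rightarrow> 'a) \<Rightarrow> (nat \<Rightarrow> 'a) \<Rightarrow> bool"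
  where "graded_equiv S M I f g \<longleftrightarrow> (\<forall>i. f i \<in> mpow_mod S M I i \<and> g i \<in> mpow_mod S M I i \<and>
    f i \<ominus>\<^bsub>M\<^esub> g i \<in> mpow_mod S M I (Suc i))"

definition single_seq :: "('s, 'a) module \<Rightarrow> nat \<Rightarrow> 'a \<Rightarrow> nat \<Rightarrow> 'a"
  where "single_seq M i x = (\<lambda>j. if j = i then x else \<zero>\<^bsub>M\<^esub>)"

lemma gr_cls_seq_cls: "gr_cls S M I i x = seq_cls S M I (single_seq M i x)"
  by (simp add: gr_cls_def seq_cls_def single_seq_def fun_eq_iff)

lemma gr_add_seq_cls_rep:
  "gr_add S M I a b = seq_cls S M I (\<lambda>k. gr_rep S M I a k \<oplus>\<^bsub>M\<^esub> gr_rep S M I b k)"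
  by (simp add: gr_add_def seq_cls_def)

lemma seq_cls_cong: "(\<And>i. f i = g i) \<Longrightarrow> seq_cls S M I f = seq_cls S M I g"
  by (simp add: seq_cls_def)

context filtered_module
begin

lemma graded_seqD: "graded_seq S M I f \<Longrightarrow> f i \<in> N i"
  by (simp add: graded_seq_def)

lemma graded_seq_carrier: "graded_seq S M I f \<Longrightarrow> f i \<in> carrier M"
  by (rule mpow_in_carrier[OF graded_seqD])

lemma graded_seq_add:
  "graded_seq S M I f \<Longrightarrow> graded_seq S M I g \<Longrightarrow> graded_seq S M I (\<lambda>i. f i \<oplus>\<^bsub>M\<^esub> g i)"
  unfolding graded_seq_def by (metis max.boundedE mpow_add)

lemma graded_seq_a_inv: "graded_seq S M I f \<Longrightarrow> graded_seq S M I (\<lambda>i. \<ominus>\<^bsub>M\<^esub> f i)"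
  unfolding graded_seq_def by (metis mpow_a_inv)

lemma graded_seq_zero: "graded_seq S M I (\<lambda>i. \<zero>\<^bsub>M\<^esub>)"
  by (simp add: graded_seq_def)

lemma graded_seq_single: "x \<in> N i \<Longrightarrow> graded_seq S M I (single_seq M i x)"
  unfolding graded_seq_def single_seq_def by (intro conjI exI[of _ "Suc i"] allI impI) auto

lemma seq_cls_eq_iff:
  assumes "\<And>i. f i \<in> N i" "\<And>i. g i \<in> N i"
  shows "seq_cls S M I f = seq_cls S M I g \<longleftrightarrow> graded_equiv S M I f g"
proof -
  have "cls M (N (Suc i)) (f i) = cls M (N (Suc i)) (g i) \<longleftrightarrow> f i \<ominus>\<^bsub>M\<^esub> g i \<in> N (Suc i)" for i
    using assms by (intro cls_eq_iff[OF module_axioms submodule_mpow] mpow_in_carrier)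
  then show ?thesis using assms by (simp add: seq_cls_def graded_equiv_def fun_eq_iff)
qed

lemma seq_cls_eqI: "graded_equiv S M I f g \<Longrightarrow> seq_cls S M I f = seq_cls S M I g"
  using seq_cls_eq_iff by (simp add: graded_equiv_def)

lemma seq_cls_in_gr_carrier:
  assumes f: "graded_seq S M I f"
  shows "seq_cls S M I f \<in> gr_carrier S M I"
proof -
  obtain K where K: "\<And>i. i \<ge> K \<Longrightarrow> f i \<in> N (Suc i)"
    using f by (auto simp: graded_seq_def)
  have "{i. seq_cls S M I f i \<noteq> cls M (N (Suc i)) \<zero>\<^bsub>M\<^esub>} \<subseteq> {..<K}"
    using K cls_eq_iff[OF module_axioms submodule_mpow graded_seq_carrier[OF f]]
    by (auto simp: seq_cls_def a_minus_def graded_seq_carrier[OF f] not_less[symmetric])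
  then show ?thesis
    using f finite_subset unfolding gr_carrier_def graded_seq_def seq_cls_def by blast
qed

lemma gr_rep:
  assumes "c \<in> gr_carrier S M I"
  shows "gr_rep S M I c i \<in> N i" and "c i = cls M (N (Suc i)) (gr_rep S M I c i)"
proof -
  have "\<exists>x. x \<in> N i \<and> c i = cls M (N (Suc i)) x"
    using assms unfolding gr_carrier_def by auto
  from someI_ex[OF this] show "gr_rep S M I c i \<in> N i" "c i = cls M (N (Suc i)) (gr_rep S M I c i)"
    unfolding gr_rep_def by auto
qed

lemma seq_cls_gr_rep: "c \<in> gr_carrier S M I \<Longrightarrow> seq_cls S M I (gr_rep S M I c) = c"
  using gr_rep by (auto simp: seq_cls_def fun_eq_iff)

lemma graded_seq_gr_rep:
  assumes c: "c \<in> gr_carrier S M I"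
  shows "graded_seq S M I (gr_rep S M I c)"
proof -
  obtain K where K: "\<And>i. c i \<noteq> cls M (N (Suc i)) \<zero>\<^bsub>M\<^esub> \<Longrightarrow> i < K"
    using c unfolding gr_carrier_def finite_nat_set_iff_bounded by auto
  have "gr_rep S M I c i \<in> N (Suc i)" if "K \<le> i" for i
    using that K[of i] gr_rep[OF c, of i] mpow_in_carrier
      cls_eq_iff[OF module_axioms submodule_mpow, of "gr_rep S M I c i" "\<zero>\<^bsub>M\<^esub>"]
    by (auto simp: a_minus_def)
  then show ?thesis unfolding graded_seq_def using gr_rep(1)[OF c] by auto
qed

lemma gr_carrier_obtain:
  assumes "c \<in> gr_carrier S M I"
  obtains f where "graded_seq S M I f" "c = seq_cls S M I f"
  using graded_seq_gr_rep[OF assms] seq_cls_gr_rep[OF assms] by metis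

lemma graded_equiv_gr_rep:
  assumes f: "graded_seq S M I f"
  shows "graded_equiv S M I (gr_rep S M I (seq_cls S M I f)) f"
  using seq_cls_eq_iff[OF gr_rep(1)[OF seq_cls_in_gr_carrier[OF f]] graded_seqD[OF f]]
    seq_cls_gr_rep[OF seq_cls_in_gr_carrier[OF f]]
  by simp

lemma graded_equiv_trans:
  assumes "graded_equiv S M I f g" and "graded_equiv S M I g h"
  shows "graded_equiv S M I f h"
proof -
  have "f i \<ominus>\<^bsub>M\<^esub> h i = (f i \<ominus>\<^bsub>M\<^esub> g i) \<oplus>\<^bsub>M\<^esub> (g i \<ominus>\<^bsub>M\<^esub> h i)" for i
  proof -
    have "f i \<in> carrier M" "g i \<in> carrier M" "h i \<in> carrier M"
      using assms mpow_in_carrier by (auto simp: graded_equiv_def)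
    then show ?thesis by (simp add: a_minus_def a_assoc r_neg1)
  qed
  then show ?thesis using assms mpow_add by (simp add: graded_equiv_def)
qed

lemma graded_equiv_add:
  assumes "graded_equiv S M I f g" and "graded_equiv S M I f' g'"
  shows "graded_equiv S M I (\<lambda>i. f i \<oplus>\<^bsub>M\<^esub> f' i) (\<lambda>i. g i \<oplus>\<^bsub>M\<^esub> g' i)"
proof -
  have "(f i \<oplus>\<^bsub>M\<^esub> f' i) \<ominus>\<^bsub>M\<^esub> (g i \<oplus>\<^bsub>M\<^esub> g' i) = (f i \<ominus>\<^bsub>M\<^esub> g i) \<oplus>\<^bsub>M\<^esub> (f' i \<ominus>\<^bsub>M\<^esub> g' i)" for i
  proof -
    have "f i \<in> carrier M" "g i \<in> carrier M" "f' i \<in> carrier M" "g' i \<in> carrier M"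
      using assms mpow_in_carrier by (auto simp: graded_equiv_def)
    then show ?thesis by (simp add: a_minus_def minus_add a_ac)
  qed
  then show ?thesis using assms mpow_add by (simp add: graded_equiv_def)
qed

lemma gr_add_seq_cls:
  "graded_seq S M I f \<Longrightarrow> graded_seq S M I g \<Longrightarrow>
    gr_add S M I (seq_cls S M I f) (seq_cls S M I g) = seq_cls S M I (\<lambda>i. f i \<oplus>\<^bsub>M\<^esub> g i)"
  unfolding gr_add_seq_cls_rep by (intro seq_cls_eqI graded_equiv_add graded_equiv_gr_rep)

lemma gr_zero_seq_cls: "gr_cls S M I 0 \<zero>\<^bsub>M\<^esub> = seq_cls S M I (\<lambda>i. \<zero>\<^bsub>M\<^esub>)"
  unfolding gr_cls_seq_cls single_seq_def by (rule seq_cls_cong) simp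

lemma gr_abelian_group:
  fixes G :: "(nat \<Rightarrow> 'a set, 'm) ring_scheme"
  assumes carrier: "carrier G = gr_carrier S M I" and add: "ring.add G = gr_add S M I"
    and zero: "ring.zero G = gr_cls S M I 0 \<zero>\<^bsub>M\<^esub>"
  shows "abelian_group G"
proof (rule abelian_groupI, unfold carrier add zero gr_zero_seq_cls)
  note closed = seq_cls_in_gr_carrier graded_seq_add graded_seq_a_inv graded_seq_zero
  note sum = gr_add_seq_cls graded_seq_add graded_seq_zero graded_seq_a_inv
  show "seq_cls S M I (\<lambda>i. \<zero>\<^bsub>M\<^esub>) \<in> gr_carrier S M I"
    by (intro closed)
  fix x y z assume x: "x \<in> gr_carrier S M I" and y: "y \<in> gr_carrier S M I"
    and z: "z \<in> gr_carrier S M I"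
  obtain f g h where f: "graded_seq S M I f" "x = seq_cls S M I f"
    and g: "graded_seq S M I g" "y = seq_cls S M I g" and h: "graded_seq S M I h" "z = seq_cls S M I h"
    using gr_carrier_obtain x y z by metis
  note carr = graded_seq_carrier[OF f(1)] graded_seq_carrier[OF g(1)] graded_seq_carrier[OF h(1)]
  show "gr_add S M I x y \<in> gr_carrier S M I"
    by (simp add: f g sum closed)
  show "gr_add S M I (gr_add S M I x y) z = gr_add S M I x (gr_add S M I y z)"
    by (simp add: f g h sum a_assoc carr)
  show "gr_add S M I x y = gr_add S M I y x"
    by (simp add: f g sum a_comm carr)
  show "gr_add S M I (seq_cls S M I (\<lambda>i. \<zero>\<^bsub>M\<^esub>)) x = x"
    by (simp add: f sum carr)
  show "\<exists>y\<in>gr_carrier S M I. gr_add S M I y x = seq_cls S M I (\<lambda>i. \<zero>\<^bsub>M\<^esub>)"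
    by (intro bexI[of _ "seq_cls S M I (\<lambda>i. \<ominus>\<^bsub>M\<^esub> f i)"]) (simp_all add: f sum closed l_neg carr)
qed

end

section \<open>Bilinear maps and convolution\<close>

locale bilinear_map =
  A: module S A + B: module S B + P: module S P
  for S :: "('s, 'c) ring_scheme" and A :: "('s, 'a) module" and B :: "('s, 'b) module"
    and P :: "('s, 'p) module" +
  fixes \<beta> :: "'a \<Rightarrow> 'b \<Rightarrow> 'p"
  assumes closed: "x \<in> carrier A \<Longrightarrow> y \<in> carrier B \<Longrightarrow> \<beta> x y \<in> carrier P"
    and add_left: "x \<in> carrier A \<Longrightarrow> x' \<in> carrier A \<Longrightarrow> y \<in> carrier B \<Longrightarrow>
      \<beta> (x \<oplus>\<^bsub>A\<^esub> x') y = \<beta> x y \<oplus>\<^bsub>P\<^esub> \<beta> x' y"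
    and add_right: "x \<in> carrier A \<Longrightarrow> y \<in> carrier B \<Longrightarrow> y' \<in> carrier B \<Longrightarrow>
      \<beta> x (y \<oplus>\<^bsub>B\<^esub> y') = \<beta> x y \<oplus>\<^bsub>P\<^esub> \<beta> x y'"
    and smult_left: "s \<in> carrier S \<Longrightarrow> x \<in> carrier A \<Longrightarrow> y \<in> carrier B \<Longrightarrow>
      \<beta> (s \<odot>\<^bsub>A\<^esub> x) y = s \<odot>\<^bsub>P\<^esub> \<beta> x y"
    and smult_right: "s \<in> carrier S \<Longrightarrow> x \<in> carrier A \<Longrightarrow> y \<in> carrier B \<Longrightarrow>
      \<beta> x (s \<odot>\<^bsub>B\<^esub> y) = s \<odot>\<^bsub>P\<^esub> \<beta> x y"
begin

lemma linear_map_left: "y \<in> carrier B \<Longrightarrow> linear_map S A P (\<lambda>x. \<beta> x y)"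
  by (simp add: linear_map_def closed add_left smult_left)

lemma linear_map_right: "x \<in> carrier A \<Longrightarrow> linear_map S B P (\<beta> x)"
  by (simp add: linear_map_def closed add_right smult_right)

lemma hom_left: "y \<in> carrier B \<Longrightarrow> abelian_group_hom A P (\<lambda>x. \<beta> x y)"
  by (rule linear_map_abelian_group_hom[OF A.module_axioms P.module_axioms linear_map_left])

lemma hom_right: "x \<in> carrier A \<Longrightarrow> abelian_group_hom B P (\<beta> x)"
  by (rule linear_map_abelian_group_hom[OF B.module_axioms P.module_axioms linear_map_right])

lemma zero_left [simp]: "y \<in> carrier B \<Longrightarrow> \<beta> \<zero>\<^bsub>A\<^esub> y = \<zero>\<^bsub>P\<^esub>"
  using abelian_group_hom.hom_zero[OF hom_left] .

lemma zero_right [simp]: "x \<in> carrier A \<Longrightarrow> \<beta> x \<zero>\<^bsub>B\<^esub> = \<zero>\<^bsub>P\<^esub>"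
  using abelian_group_hom.hom_zero[OF hom_right] .

lemma minus_left:
  "x \<in> carrier A \<Longrightarrow> x' \<in> carrier A \<Longrightarrow> y \<in> carrier B \<Longrightarrow> \<beta> (x \<ominus>\<^bsub>A\<^esub> x') y = \<beta> x y \<ominus>\<^bsub>P\<^esub> \<beta> x' y"
  using abelian_group_hom.hom_minus[OF hom_left] .

lemma minus_right:
  "x \<in> carrier A \<Longrightarrow> y \<in> carrier B \<Longrightarrow> y' \<in> carrier B \<Longrightarrow> \<beta> x (y \<ominus>\<^bsub>B\<^esub> y') = \<beta> x y \<ominus>\<^bsub>P\<^esub> \<beta> x y'"
  using abelian_group_hom.hom_minus[OF hom_right] .

lemma finsum_left: "g \<in> K \<rightarrow> carrier A \<Longrightarrow> y \<in> carrier B \<Longrightarrow> \<beta> (finsum A g K) y = (\<Oplus>\<^bsub>P\<^esub>i\<in>K. \<beta> (g i) y)"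
  using abelian_group_hom.hom_finsum[OF hom_left] by blast

lemma finsum_right: "g \<in> K \<rightarrow> carrier B \<Longrightarrow> x \<in> carrier A \<Longrightarrow> \<beta> x (finsum B g K) = (\<Oplus>\<^bsub>P\<^esub>i\<in>K. \<beta> x (g i))"
  using abelian_group_hom.hom_finsum[OF hom_right] by blast

lemma mpow_mult:
  assumes I: "I \<subseteq> carrier S" and x: "x \<in> mpow_mod S A I i" and y: "y \<in> mpow_mod S B I j"
  shows "\<beta> x y \<in> mpow_mod S P I (i + j)"
proof -
  have "\<beta> x ` carrier B \<subseteq> mpow_mod S P I i"
    using linear_map_mpow[OF A.module_axioms P.module_axioms I linear_map_left, of _ 0 x i] x closed
    by (auto simp: filtered_module.mpow_in_carrier[OF filtered_moduleI[OF A.module_axioms I]])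
  from linear_map_mpow[OF B.module_axioms P.module_axioms I linear_map_right this] y
  show ?thesis
    using filtered_module.mpow_in_carrier[OF filtered_moduleI[OF A.module_axioms I] x]
    by (metis add.commute)
qed

end

lemma bilinear_map_swap: "bilinear_map S A B P \<beta> \<Longrightarrow> bilinear_map S B A P (\<lambda>y x. \<beta> x y)"
  unfolding bilinear_map_def bilinear_map_axioms_def by auto

lemma bilinear_map_zero:
  "module S A \<Longrightarrow> module S B \<Longrightarrow> module S P \<Longrightarrow> bilinear_map S A B P (\<lambda>x y. \<zero>\<^bsub>P\<^esub>)"
  unfolding bilinear_map_def bilinear_map_axioms_def
  by (auto simp: module.smult_r_null abelian_monoid.r_zero abelian_monoid.zero_closed
      module.axioms(2) abelian_group.axioms(1))

definition conv :: "('s, 'p) module \<Rightarrow> ('a \<Rightarrow> 'b \<Rightarrow> 'p) \<Rightarrow> (nat \<Rightarrow> 'a) \<Rightarrow> (nat \<Rightarrow> 'b) \<Rightarrow> nat \<Rightarrow> 'p"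
  where "conv P \<beta> f g = (\<lambda>t. \<Oplus>\<^bsub>P\<^esub>i\<in>{..t}. \<beta> (f i) (g (t - i)))"

context bilinear_map
begin

lemma conv_closed:
  "(\<And>i. f i \<in> carrier A) \<Longrightarrow> (\<And>i. g i \<in> carrier B) \<Longrightarrow> conv P \<beta> f g t \<in> carrier P"
  unfolding conv_def by (auto intro!: P.finsum_closed closed)

lemma conv_add_left:
  assumes "\<And>i. f i \<in> carrier A" "\<And>i. f' i \<in> carrier A" "\<And>i. g i \<in> carrier B"
  shows "conv P \<beta> (\<lambda>i. f i \<oplus>\<^bsub>A\<^esub> f' i) g t = conv P \<beta> f g t \<oplus>\<^bsub>P\<^esub> conv P \<beta> f' g t"
  unfolding conv_def using assms
  by (simp add: add_left closed P.finsum_addf Pi_iff cong: P.finsum_cong)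

lemma conv_add_right:
  assumes "\<And>i. f i \<in> carrier A" "\<And>i. g i \<in> carrier B" "\<And>i. g' i \<in> carrier B"
  shows "conv P \<beta> f (\<lambda>i. g i \<oplus>\<^bsub>B\<^esub> g' i) t = conv P \<beta> f g t \<oplus>\<^bsub>P\<^esub> conv P \<beta> f g' t"
  unfolding conv_def using assms
  by (simp add: add_right closed P.finsum_addf Pi_iff cong: P.finsum_cong)

lemma conv_single_left:
  assumes x: "x \<in> carrier A" and g: "\<And>i. g i \<in> carrier B"
  shows "conv P \<beta> (single_seq A k x) g t = (if k \<le> t then \<beta> x (g (t - k)) else \<zero>\<^bsub>P\<^esub>)"
proof -
  have "conv P \<beta> (single_seq A k x) g t = (\<Oplus>\<^bsub>P\<^esub>i\<in>{..t}. if k = i \<and> k \<le> t then \<beta> x (g (t - i)) else \<zero>\<^bsub>P\<^esub>)"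
    unfolding conv_def single_seq_def using x g by (intro P.finsum_cong) (auto simp: closed simp_implies_def)
  then show ?thesis using x g by (simp add: P.finsum_singleton closed)
qed

lemma conv_single_right:
  assumes y: "y \<in> carrier B" and f: "\<And>i. f i \<in> carrier A"
  shows "conv P \<beta> f (single_seq B k y) t = (if k \<le> t then \<beta> (f (t - k)) y else \<zero>\<^bsub>P\<^esub>)"
proof -
  have "conv P \<beta> f (single_seq B k y) t = (\<Oplus>\<^bsub>P\<^esub>i\<in>{..t}. if t - k = i \<and> k \<le> t then \<beta> (f (t - k)) y else \<zero>\<^bsub>P\<^esub>)"
    unfolding conv_def single_seq_def using y f by (intro P.finsum_cong) (auto simp: closed simp_implies_def)
  then show ?thesis using y f by (simp add: P.finsum_singleton closed)
qed

end

locale filtered_bilinear_map = bilinear_map +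
  fixes I
  assumes ideal_subset: "I \<subseteq> carrier S"

lemma filtered_bilinear_mapI:
  "bilinear_map S A B P \<beta> \<Longrightarrow> I \<subseteq> carrier S \<Longrightarrow> filtered_bilinear_map S A B P \<beta> I"
  by (simp add: filtered_bilinear_map_def filtered_bilinear_map_axioms_def)

context filtered_bilinear_map
begin

sublocale FA: filtered_module S A I by (rule filtered_moduleI[OF A.module_axioms ideal_subset])
sublocale FB: filtered_module S B I by (rule filtered_moduleI[OF B.module_axioms ideal_subset])
sublocale FP: filtered_module S P I by (rule filtered_moduleI[OF P.module_axioms ideal_subset])

lemma conv_mpow:
  "(\<And>i. i \<le> t \<Longrightarrow> \<beta> (f i) (g (t - i)) \<in> FP.N k) \<Longrightarrow> conv P \<beta> f g t \<in> FP.N k"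
  unfolding conv_def by (rule FP.mpow_finsum) simp

lemma conv_mpow_shifted:
  assumes f: "\<And>i. f i \<in> FA.N (i + a)" and g: "\<And>j. g j \<in> FB.N (j + b)"
  shows "conv P \<beta> f g t \<in> FP.N (t + a + b)"
proof (rule conv_mpow)
  fix i assume "i \<le> t"
  then show "\<beta> (f i) (g (t - i)) \<in> FP.N (t + a + b)"
    using mpow_mult[OF ideal_subset f g, of i "t - i"] by (simp add: algebra_simps)
qed

lemma conv_graded_seq:
  assumes f: "graded_seq S A I f" and g: "graded_seq S B I g"
  shows "graded_seq S P I (conv P \<beta> f g)"
proof -
  obtain K K' where K: "\<And>i. i \<ge> K \<Longrightarrow> f i \<in> FA.N (Suc i)"
    and K': "\<And>i. i \<ge> K' \<Longrightarrow> g i \<in> FB.N (Suc i)"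
    using f g unfolding graded_seq_def by blast
  note f_deg = FA.graded_seqD[OF f] and g_deg = FB.graded_seqD[OF g]
  have "conv P \<beta> f g t \<in> FP.N t" for t
    using conv_mpow_shifted[of f 0 g 0] f_deg g_deg by simp
  moreover have "conv P \<beta> f g t \<in> FP.N (Suc t)" if t: "t \<ge> K + K'" for t
  proof (rule conv_mpow)
    fix i assume "i \<le> t"
    then consider "i \<ge> K" | "t - i \<ge> K'" using t by linarith
    then show "\<beta> (f i) (g (t - i)) \<in> FP.N (Suc t)"
    proof cases
      case 1
      then show ?thesis using mpow_mult[OF ideal_subset K[OF 1] g_deg[of "t - i"]] \<open>i \<le> t\<close> by simp
    next
      case 2
      then show ?thesis using mpow_mult[OF ideal_subset f_deg[of i] K'[OF 2]] \<open>i \<le> t\<close> by simp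
    qed
  qed
  ultimately show ?thesis unfolding graded_seq_def by blast
qed

lemma conv_graded_equiv_left:
  assumes e: "graded_equiv S A I f f'" and g: "\<And>i. g i \<in> FB.N i"
  shows "graded_equiv S P I (conv P \<beta> f g) (conv P \<beta> f' g)"
proof -
  have f: "\<And>i. f i \<in> FA.N i" and f': "\<And>i. f' i \<in> FA.N i"
    and diff: "\<And>i. f i \<ominus>\<^bsub>A\<^esub> f' i \<in> FA.N (Suc i)"
    using e unfolding graded_equiv_def by auto
  note carr = FA.mpow_in_carrier[OF f] FA.mpow_in_carrier[OF f'] FB.mpow_in_carrier[OF g]
  have "conv P \<beta> f g t \<ominus>\<^bsub>P\<^esub> conv P \<beta> f' g t = conv P \<beta> (\<lambda>i. f i \<ominus>\<^bsub>A\<^esub> f' i) g t" for t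
    unfolding conv_def
    by (simp add: P.finsum_diff[symmetric] Pi_iff closed carr minus_left cong: P.finsum_cong)
  moreover have "conv P \<beta> (\<lambda>i. f i \<ominus>\<^bsub>A\<^esub> f' i) g t \<in> FP.N (Suc t)" for t
    using conv_mpow_shifted[of _ 1 g 0] diff g by simp
  moreover have "conv P \<beta> h g t \<in> FP.N t" if "\<And>i. h i \<in> FA.N i" for h t
    using conv_mpow_shifted[of h 0 g 0] that g by simp
  ultimately show ?thesis unfolding graded_equiv_def using f f' by simp
qed

lemma conv_graded_equiv_right:
  assumes e: "graded_equiv S B I g g'" and f: "\<And>i. f i \<in> FA.N i"
  shows "graded_equiv S P I (conv P \<beta> f g) (conv P \<beta> f g')"
proof -
  have g: "\<And>i. g i \<in> FB.N i" and g': "\<And>i. g' i \<in> FB.N i"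
    and diff: "\<And>i. g i \<ominus>\<^bsub>B\<^esub> g' i \<in> FB.N (Suc i)"
    using e unfolding graded_equiv_def by auto
  note carr = FA.mpow_in_carrier[OF f] FB.mpow_in_carrier[OF g] FB.mpow_in_carrier[OF g']
  have "conv P \<beta> f g t \<ominus>\<^bsub>P\<^esub> conv P \<beta> f g' t = conv P \<beta> f (\<lambda>i. g i \<ominus>\<^bsub>B\<^esub> g' i) t" for t
    unfolding conv_def
    by (simp add: P.finsum_diff[symmetric] Pi_iff closed carr minus_right cong: P.finsum_cong)
  moreover have "conv P \<beta> f (\<lambda>i. g i \<ominus>\<^bsub>B\<^esub> g' i) t \<in> FP.N (Suc t)" for t
    using conv_mpow_shifted[of f 0 _ 1] diff f by simp
  moreover have "conv P \<beta> f h t \<in> FP.N t" if "\<And>i. h i \<in> FB.N i" for h t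
    using conv_mpow_shifted[of f 0 h 0] that f by simp
  ultimately show ?thesis unfolding graded_equiv_def using g g' by simp
qed

lemma seq_cls_conv:
  assumes "graded_seq S A I f" and "graded_seq S B I g"
  shows "seq_cls S P I (conv P \<beta> (gr_rep S A I (seq_cls S A I f)) (gr_rep S B I (seq_cls S B I g)))
    = seq_cls S P I (conv P \<beta> f g)"
proof -
  note rep = FA.graded_equiv_gr_rep[OF assms(1)] FB.graded_equiv_gr_rep[OF assms(2)]
  show ?thesis
    by (intro FP.seq_cls_eqI FP.graded_equiv_trans[OF conv_graded_equiv_left conv_graded_equiv_right]
        rep FA.graded_seqD[OF assms(1)])
       (use rep in \<open>simp add: graded_equiv_def\<close>)
qed

end

lemma conv_assoc:
  assumes b1: "bilinear_map S A B P \<beta>1" and b2: "bilinear_map S B C P' \<beta>2"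
    and b3: "bilinear_map S P C Q \<beta>3" and b4: "bilinear_map S A P' Q \<beta>4"
    and assoc: "\<And>x y z. x \<in> carrier A \<Longrightarrow> y \<in> carrier B \<Longrightarrow> z \<in> carrier C \<Longrightarrow>
      \<beta>3 (\<beta>1 x y) z = \<beta>4 x (\<beta>2 y z)"
    and f: "\<And>i. f i \<in> carrier A" and g: "\<And>i. g i \<in> carrier B" and h: "\<And>i. h i \<in> carrier C"
  shows "conv Q \<beta>3 (conv P \<beta>1 f g) h = conv Q \<beta>4 f (conv P' \<beta>2 g h)"
proof
  fix t
  interpret b1: bilinear_map S A B P \<beta>1 by fact
  interpret b2: bilinear_map S B C P' \<beta>2 by fact
  interpret b3: bilinear_map S P C Q \<beta>3 by fact
  interpret b4: bilinear_map S A P' Q \<beta>4 by fact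
  let ?X = "\<lambda>i j. \<beta>3 (\<beta>1 (f j) (g (i - j))) (h (t - i))"
  have X: "\<And>i j. ?X i j \<in> carrier Q" using f g h b1.closed b3.closed by simp
  have "conv Q \<beta>3 (conv P \<beta>1 f g) h t = (\<Oplus>\<^bsub>Q\<^esub>i\<in>{..t}. \<Oplus>\<^bsub>Q\<^esub>j\<in>{..i}. ?X i j)"
    unfolding conv_def
    by (intro b3.P.finsum_cong)
       (auto simp: b3.finsum_left Pi_iff f g h b1.closed b3.closed intro!: b3.P.finsum_closed)
  also have "\<dots> = (\<Oplus>\<^bsub>Q\<^esub>j\<in>{..t}. \<Oplus>\<^bsub>Q\<^esub>l\<in>{..t - j}. ?X (j + l) j)"
    by (rule b3.P.finsum_triangle_swap[OF X])
  also have "\<dots> = conv Q \<beta>4 f (conv P' \<beta>2 g h) t"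
    unfolding conv_def
    by (intro b3.P.finsum_cong)
       (auto simp: b4.finsum_right Pi_iff f g h b2.closed b4.closed assoc diff_diff_add
         intro!: b3.P.finsum_cong b3.P.finsum_closed)
  finally show "conv Q \<beta>3 (conv P \<beta>1 f g) h t = conv Q \<beta>4 f (conv P' \<beta>2 g h) t" .
qed

lemma conv_comm:
  assumes b: "bilinear_map S A B Q \<beta>" and b': "bilinear_map S B A Q \<beta>'"
    and \<sigma>: "abelian_group_hom Q Q \<sigma>"
    and comm: "\<And>x y. x \<in> carrier A \<Longrightarrow> y \<in> carrier B \<Longrightarrow> \<beta> x y = \<sigma> (\<beta>' y x)"
    and f: "\<And>i. f i \<in> carrier A" and g: "\<And>i. g i \<in> carrier B"
  shows "conv Q \<beta> f g t = \<sigma> (conv Q \<beta>' g f t)"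
proof -
  interpret b: bilinear_map S A B Q \<beta> by fact
  interpret b': bilinear_map S B A Q \<beta>' by fact
  interpret \<sigma>: abelian_group_hom Q Q \<sigma> by fact
  have "\<sigma> (conv Q \<beta>' g f t) = (\<Oplus>\<^bsub>Q\<^esub>i\<in>{..t}. \<beta> (f (t - i)) (g i))"
    unfolding conv_def
    by (simp add: \<sigma>.hom_finsum Pi_iff f g b'.closed comm cong: b.P.finsum_cong)
  also have "\<dots> = conv Q \<beta> f g t"
    unfolding conv_def
    using b.P.finsum_reflect[of "\<lambda>k. \<beta> (f k) (g (t - k))" t] f g b.closed
    by (simp add: Pi_iff cong: b.P.finsum_cong)
  finally show ?thesis ..
qed

lemma conv_assoc_swap:
  assumes b1: "bilinear_map S B C P \<beta>1" and b2: "bilinear_map S A C P' \<beta>2"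
    and b3: "bilinear_map S A P Q \<beta>3" and b4: "bilinear_map S B P' Q \<beta>4"
    and swap: "\<And>x y z. x \<in> carrier A \<Longrightarrow> y \<in> carrier B \<Longrightarrow> z \<in> carrier C \<Longrightarrow>
      \<beta>3 x (\<beta>1 y z) = \<beta>4 y (\<beta>2 x z)"
    and f: "\<And>i. f i \<in> carrier A" and g: "\<And>i. g i \<in> carrier B" and h: "\<And>i. h i \<in> carrier C"
  shows "conv Q \<beta>3 f (conv P \<beta>1 g h) t = conv Q \<beta>4 g (conv P' \<beta>2 f h) t"
proof -
  interpret b1: bilinear_map S B C P \<beta>1 by fact
  interpret b2: bilinear_map S A C P' \<beta>2 by fact
  interpret b3: bilinear_map S A P Q \<beta>3 by fact
  note id_Q = abelian_group_hom_id[OF b3.P.abelian_group_axioms]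
    and id_P' = abelian_group_hom_id[OF b2.P.abelian_group_axioms]
  have "conv Q \<beta>3 f (conv P \<beta>1 g h) t = conv Q (\<lambda>u x. \<beta>3 x u) (conv P \<beta>1 g h) f t"
    by (rule conv_comm[OF b3 bilinear_map_swap[OF b3] id_Q]) (auto simp: f b1.conv_closed g h)
  also have "conv Q (\<lambda>u x. \<beta>3 x u) (conv P \<beta>1 g h) f = conv Q \<beta>4 g (conv P' (\<lambda>z x. \<beta>2 x z) h f)"
    by (rule conv_assoc[OF b1 bilinear_map_swap[OF b2] bilinear_map_swap[OF b3] b4])
       (auto simp: f g h swap)
  also have "conv P' (\<lambda>z x. \<beta>2 x z) h f = conv P' \<beta>2 f h"
    by (rule ext, rule conv_comm[OF bilinear_map_swap[OF b2] b2 id_P']) (auto simp: f h)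
  finally show ?thesis .
qed

lemma conv_zero_map: "abelian_group Q \<Longrightarrow> conv Q (\<lambda>x y. \<zero>\<^bsub>Q\<^esub>) f g t = \<zero>\<^bsub>Q\<^esub>"
  unfolding conv_def by (simp add: abelian_monoid.finsum_zero[OF abelian_group.axioms(1)])

text \<open>On representative sequences the differential of \<open>lin(F)\<close> is \<open>shift_map\<close> of \<open>d\<close>:
  the class in filtration degree \<open>i\<close> is sent to degree \<open>i + 1\<close>.\<close>

definition shift_map :: "('s, 'b) module \<Rightarrow> ('a \<Rightarrow> 'b) \<Rightarrow> (nat \<Rightarrow> 'a) \<Rightarrow> nat \<Rightarrow> 'b"
  where "shift_map M D f = (\<lambda>k. if k = 0 then \<zero>\<^bsub>M\<^esub> else D (f (k - 1)))"

lemma conv_shift_Leibniz: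
  assumes b: "bilinear_map S A B P \<beta>"
    and bA: "bilinear_map S A' B Q \<beta>A" and bB: "bilinear_map S A B' Q \<beta>B"
    and D: "abelian_group_hom P Q D" and DA: "abelian_group_hom A A' DA"
    and DB: "abelian_group_hom B B' DB" and \<sigma>: "abelian_group_hom Q Q \<sigma>"
    and Leibniz: "\<And>x y. x \<in> carrier A \<Longrightarrow> y \<in> carrier B \<Longrightarrow>
      D (\<beta> x y) = \<beta>A (DA x) y \<oplus>\<^bsub>Q\<^esub> \<sigma> (\<beta>B x (DB y))"
    and f: "\<And>i. f i \<in> carrier A" and g: "\<And>i. g i \<in> carrier B"
  shows "shift_map Q D (conv P \<beta> f g) t =
    conv Q \<beta>A (shift_map A' DA f) g t \<oplus>\<^bsub>Q\<^esub> \<sigma> (conv Q \<beta>B f (shift_map B' DB g) t)"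
proof -
  interpret b: bilinear_map S A B P \<beta> by fact
  interpret bA: bilinear_map S A' B Q \<beta>A by fact
  interpret bB: bilinear_map S A B' Q \<beta>B by fact
  interpret D: abelian_group_hom P Q D by fact
  interpret DA: abelian_group_hom A A' DA by fact
  interpret DB: abelian_group_hom B B' DB by fact
  interpret \<sigma>: abelian_group_hom Q Q \<sigma> by fact
  have Df: "\<And>i. shift_map A' DA f i \<in> carrier A'" and Dg: "\<And>i. shift_map B' DB g i \<in> carrier B'"
    unfolding shift_map_def using f g by simp_all
  show ?thesis
  proof (cases t)
    case 0
    then show ?thesis by (simp add: conv_def shift_map_def f g)
  next
    case (Suc j)
    let ?a = "\<lambda>i. \<beta>A (DA (f i)) (g (j - i))" and ?b = "\<lambda>i. \<beta>B (f i) (DB (g (j - i)))"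
    have ab: "\<And>i. ?a i \<in> carrier Q" "\<And>i. ?b i \<in> carrier Q"
      using f g bA.closed bB.closed by simp_all
    have "shift_map Q D (conv P \<beta> f g) t = (\<Oplus>\<^bsub>Q\<^esub>i\<in>{..j}. ?a i \<oplus>\<^bsub>Q\<^esub> \<sigma> (?b i))"
      unfolding shift_map_def conv_def using Suc f g
      by (simp add: D.hom_finsum Pi_iff b.closed)
         (intro bA.P.finsum_cong, auto simp: Leibniz f g ab \<sigma>.hom_closed)
    also have "\<dots> = (\<Oplus>\<^bsub>Q\<^esub>i\<in>{..j}. ?a i) \<oplus>\<^bsub>Q\<^esub> \<sigma> (\<Oplus>\<^bsub>Q\<^esub>i\<in>{..j}. ?b i)"
      using ab by (simp add: bA.P.finsum_addf \<sigma>.hom_finsum Pi_iff)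
    also have "(\<Oplus>\<^bsub>Q\<^esub>i\<in>{..j}. ?a i) = conv Q \<beta>A (shift_map A' DA f) g t"
    proof -
      have "conv Q \<beta>A (shift_map A' DA f) g t =
          (\<Oplus>\<^bsub>Q\<^esub>i\<in>{..j}. \<beta>A (shift_map A' DA f (Suc i)) (g (Suc j - Suc i)))
          \<oplus>\<^bsub>Q\<^esub> \<beta>A (shift_map A' DA f 0) (g (Suc j - 0))"
        unfolding conv_def Suc by (rule bA.P.finsum_Suc2) (auto simp: Df g bA.closed)
      then show ?thesis using ab g by (simp add: shift_map_def bA.P.finsum_closed Pi_iff)
    qed
    also have "(\<Oplus>\<^bsub>Q\<^esub>i\<in>{..j}. ?b i) = conv Q \<beta>B f (shift_map B' DB g) t"
      unfolding conv_def Suc using ab f Dg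
      by (simp add: bB.closed Pi_iff) (simp add: shift_map_def Suc_diff_le cong: bA.P.finsum_cong)
    finally show ?thesis .
  qed
qed

section \<open>The linear part of a minimal DG algebra\<close>

definition lin_mult :: "('r, 'c) ring_scheme \<Rightarrow> 'r set \<Rightarrow> (nat \<Rightarrow> ('r, 'f) module)
    \<Rightarrow> (nat \<Rightarrow> nat \<Rightarrow> 'f \<Rightarrow> 'f \<Rightarrow> 'f) \<Rightarrow> nat \<Rightarrow> nat \<Rightarrow> (nat \<Rightarrow> 'f set) \<Rightarrow> (nat \<Rightarrow> 'f set) \<Rightarrow> nat \<Rightarrow> 'f set"
  where "lin_mult R m F mu n k a b = seq_cls R (F (n + k)) m
    (conv (F (n + k)) (mu n k) (gr_rep R (F n) m a) (gr_rep R (F k) m b))"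

locale minimal_dg_algebra =
  fixes R :: "('r, 'c) ring_scheme" and m :: "'r set" and F :: "nat \<Rightarrow> ('r, 'f) module"
    and d :: "nat \<Rightarrow> 'f \<Rightarrow> 'f" and mu :: "nat \<Rightarrow> nat \<Rightarrow> 'f \<Rightarrow> 'f \<Rightarrow> 'f" and e :: 'f
  assumes ideal_subset: "m \<subseteq> carrier R"
    and dg: "dg_algebra R F d mu e"
    and minimal: "\<And>n. d (Suc n) ` carrier (F (Suc n)) \<subseteq> mpow_mod R (F n) m 1"
begin

lemmas dg_facts = dg[unfolded dg_algebra_def]

lemma cring: "cring R"
  using dg_facts by (elim conjE) meson

lemma module: "module R (F n)"
  using dg_facts by (elim conjE) meson

lemma linear_d: "linear_map R (F (Suc n)) (F n) (d (Suc n))"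
  using dg_facts by (elim conjE) meson

lemma d_d: "x \<in> carrier (F (Suc (Suc n))) \<Longrightarrow> d (Suc n) (d (Suc (Suc n)) x) = \<zero>\<^bsub>F n\<^esub>"
  using dg_facts by (elim conjE) meson

lemma unit_closed: "e \<in> carrier (F 0)"
  using dg_facts by (elim conjE) meson

lemma mu_unit: "x \<in> carrier (F n) \<Longrightarrow> mu 0 n e x = x" "x \<in> carrier (F n) \<Longrightarrow> mu n 0 x e = x"
  using dg_facts by (elim conjE; meson)+

lemma mu_assoc: "x \<in> carrier (F n) \<Longrightarrow> y \<in> carrier (F k) \<Longrightarrow> z \<in> carrier (F l) \<Longrightarrow>
    mu (n + k) l (mu n k x y) z = mu n (k + l) x (mu k l y z)"
  using dg_facts by (elim conjE) meson

lemma mu_comm: "x \<in> carrier (F n) \<Longrightarrow> y \<in> carrier (F k) \<Longrightarrow>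
    mu n k x y = sgn_mod (F (n + k)) (n * k) (mu k n y x)"
  using dg_facts by (elim conjE) meson

lemma mu_odd_square: "odd n \<Longrightarrow> x \<in> carrier (F n) \<Longrightarrow> mu n n x x = \<zero>\<^bsub>F (n + n)\<^esub>"
  using dg_facts by (elim conjE) meson

lemma mu_bilinear: "bilinear_map R (F n) (F k) (F (n + k)) (mu n k)"
  using dg_facts module unfolding bilinear_map_def bilinear_map_axioms_def by (elim conjE) meson

lemma Leibniz: "0 < n + k \<Longrightarrow> x \<in> carrier (F n) \<Longrightarrow> y \<in> carrier (F k) \<Longrightarrow>
    d (n + k) (mu n k x y) =
      (if n = 0 then \<zero>\<^bsub>F (n + k - 1)\<^esub> else mu (n - 1) k (d n x) y) \<oplus>\<^bsub>F (n + k - 1)\<^esub>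
      (if k = 0 then \<zero>\<^bsub>F (n + k - 1)\<^esub> else sgn_mod (F (n + k - 1)) n (mu n (k - 1) x (d k y)))"
  using dg_facts by (elim conjE) meson

sublocale R: cring R by (rule cring)

abbreviation RM where "RM \<equiv> ring_module R"
abbreviation Rg where "Rg \<equiv> assoc_graded R m"
abbreviation L where "L n \<equiv> lin_mod R m F n"
abbreviation D where "D n \<equiv> shift_map (F n) (d (Suc n))"

sublocale Rm: filtered_bilinear_map R RM RM RM "\<lambda>x y. x \<otimes>\<^bsub>R\<^esub> y" m
  by (intro filtered_bilinear_mapI bilinear_map.intro bilinear_map_axioms.intro module_ring_module
      cring ideal_subset) (simp_all add: R.l_distr R.r_distr R.m_assoc R.m_lcomm)

lemma smult_bilinear: "filtered_bilinear_map R RM (F n) (F n) (\<lambda>s x. s \<odot>\<^bsub>F n\<^esub> x) m"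
proof -
  interpret module R "F n" by (rule module)
  show ?thesis
    by (intro filtered_bilinear_mapI bilinear_map.intro bilinear_map_axioms.intro module_ring_module
        cring ideal_subset module)
       (simp_all add: smult_l_distr smult_r_distr smult_assoc1 flip: smult_assoc1, simp add: R.m_comm)
qed

lemma mu_filtered_bilinear: "filtered_bilinear_map R (F n) (F k) (F (n + k)) (mu n k) m"
  by (rule filtered_bilinear_mapI[OF mu_bilinear ideal_subset])

lemma filtered_F: "filtered_module R (F n) m"
  by (rule filtered_moduleI[OF module ideal_subset])

lemma Rg_carrier: "carrier Rg = gr_carrier R RM m"
  and Rg_add: "ring.add Rg = gr_add R RM m"
  and Rg_zero: "ring.zero Rg = gr_cls R RM m 0 \<zero>\<^bsub>RM\<^esub>"
  and Rg_one: "monoid.one Rg = seq_cls R RM m (single_seq RM 0 \<one>\<^bsub>R\<^esub>)"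
  by (simp_all add: assoc_graded_def Let_def gr_cls_seq_cls)

lemma Rg_obtain:
  assumes "a \<in> carrier Rg" obtains f where "graded_seq R RM m f" "a = seq_cls R RM m f"
  using Rm.FA.gr_carrier_obtain assms Rg_carrier by metis

lemma Rg_mult_seq_cls:
  assumes "graded_seq R RM m f" "graded_seq R RM m g"
  shows "seq_cls R RM m f \<otimes>\<^bsub>Rg\<^esub> seq_cls R RM m g = seq_cls R RM m (conv RM (\<lambda>x y. x \<otimes>\<^bsub>R\<^esub> y) f g)"
  using Rm.seq_cls_conv[OF assms] by (simp add: assoc_graded_def Let_def seq_cls_def conv_def)

lemma cring_Rg: "cring Rg"
proof (rule cringI)
  show "abelian_group Rg"
    by (rule Rm.FA.gr_abelian_group[OF Rg_carrier Rg_add Rg_zero])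
  note graded = Rm.conv_graded_seq Rm.FA.graded_seq_add[simplified] Rm.FA.graded_seq_single
  note carr = Rm.FA.graded_seq_carrier
  have unit: "graded_seq R RM m (single_seq RM 0 \<one>\<^bsub>R\<^esub>)"
    by (rule Rm.FA.graded_seq_single) simp
  show "comm_monoid Rg"
  proof (rule comm_monoidI)
    show "\<one>\<^bsub>Rg\<^esub> \<in> carrier Rg"
      unfolding Rg_one Rg_carrier by (rule Rm.FA.seq_cls_in_gr_carrier[OF unit])
    fix x y z assume "x \<in> carrier Rg" "y \<in> carrier Rg" "z \<in> carrier Rg"
    then obtain f g h where f: "graded_seq R RM m f" "x = seq_cls R RM m f"
      and g: "graded_seq R RM m g" "y = seq_cls R RM m g" and h: "graded_seq R RM m h" "z = seq_cls R RM m h"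
      using Rg_obtain by metis
    show "x \<otimes>\<^bsub>Rg\<^esub> y \<in> carrier Rg"
      by (simp add: f g Rg_mult_seq_cls Rg_carrier Rm.FA.seq_cls_in_gr_carrier graded)
    show "x \<otimes>\<^bsub>Rg\<^esub> y \<otimes>\<^bsub>Rg\<^esub> z = x \<otimes>\<^bsub>Rg\<^esub> (y \<otimes>\<^bsub>Rg\<^esub> z)"
      by (simp add: f g h Rg_mult_seq_cls graded,
          rule arg_cong[where f = "seq_cls R RM m"],
          rule conv_assoc[OF Rm.bilinear_map_axioms Rm.bilinear_map_axioms
            Rm.bilinear_map_axioms Rm.bilinear_map_axioms])
         (use carr[OF f(1)] carr[OF g(1)] carr[OF h(1)] in \<open>simp_all add: R.m_assoc\<close>)
    show "x \<otimes>\<^bsub>Rg\<^esub> y = y \<otimes>\<^bsub>Rg\<^esub> x"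
      by (simp add: f g Rg_mult_seq_cls, rule seq_cls_cong,
          rule conv_comm[OF Rm.bilinear_map_axioms Rm.bilinear_map_axioms
            abelian_group_hom_id[OF module.axioms(2)[OF module_ring_module[OF cring]]]])
         (use carr[OF f(1)] carr[OF g(1)] in \<open>simp_all add: R.m_comm\<close>)
    show "\<one>\<^bsub>Rg\<^esub> \<otimes>\<^bsub>Rg\<^esub> x = x"
      using carr[OF f(1)]
      by (simp add: f Rg_one Rg_mult_seq_cls unit Rm.conv_single_left cong: seq_cls_cong)
  qed
  fix x y z assume "x \<in> carrier Rg" "y \<in> carrier Rg" "z \<in> carrier Rg"
  then obtain f g h where f: "graded_seq R RM m f" "x = seq_cls R RM m f"
    and g: "graded_seq R RM m g" "y = seq_cls R RM m g" and h: "graded_seq R RM m h" "z = seq_cls R RM m h"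
    using Rg_obtain by metis
  show "(x \<oplus>\<^bsub>Rg\<^esub> y) \<otimes>\<^bsub>Rg\<^esub> z = x \<otimes>\<^bsub>Rg\<^esub> z \<oplus>\<^bsub>Rg\<^esub> y \<otimes>\<^bsub>Rg\<^esub> z"
    using carr[OF f(1)] carr[OF g(1)] carr[OF h(1)]
    by (simp add: f g h Rg_add Rg_mult_seq_cls Rm.FA.gr_add_seq_cls graded Rm.conv_add_left[simplified]
        cong: seq_cls_cong)
qed

lemma L_carrier: "carrier (L n) = gr_carrier R (F n) m"
  and L_add: "ring.add (L n) = gr_add R (F n) m"
  and L_zero: "ring.zero (L n) = gr_cls R (F n) m 0 \<zero>\<^bsub>F n\<^esub>"
  by (simp_all add: lin_mod_def)

lemma L_obtain:
  assumes "x \<in> carrier (L n)" obtains f where "graded_seq R (F n) m f" "x = seq_cls R (F n) m f"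
  using filtered_module.gr_carrier_obtain[OF filtered_F] assms L_carrier by metis

lemma L_smult_seq_cls:
  assumes "graded_seq R RM m f" "graded_seq R (F n) m g"
  shows "seq_cls R RM m f \<odot>\<^bsub>L n\<^esub> seq_cls R (F n) m g
    = seq_cls R (F n) m (conv (F n) (\<lambda>s x. s \<odot>\<^bsub>F n\<^esub> x) f g)"
  using filtered_bilinear_map.seq_cls_conv[OF smult_bilinear assms]
  by (simp add: lin_mod_def seq_cls_def conv_def)

lemma module_L: "module Rg (L n)"
proof (rule moduleI[OF cring_Rg])
  interpret Fn: filtered_module R "F n" m by (rule filtered_F)
  interpret Sm: filtered_bilinear_map R RM "F n" "F n" "\<lambda>s x. s \<odot>\<^bsub>F n\<^esub> x" m
    by (rule smult_bilinear)
  show "abelian_group (L n)"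
    by (rule Fn.gr_abelian_group[OF L_carrier L_add L_zero])
  note graded = Sm.conv_graded_seq Rm.FA.graded_seq_add[simplified] Fn.graded_seq_add
    Rm.conv_graded_seq
  fix a b x y assume "a \<in> carrier Rg" "b \<in> carrier Rg" "x \<in> carrier (L n)" "y \<in> carrier (L n)"
  then obtain f f' g g' where f: "graded_seq R RM m f" "a = seq_cls R RM m f"
    and f': "graded_seq R RM m f'" "b = seq_cls R RM m f'"
    and g: "graded_seq R (F n) m g" "x = seq_cls R (F n) m g"
    and g': "graded_seq R (F n) m g'" "y = seq_cls R (F n) m g'"
    using Rg_obtain L_obtain by metis
  note carrs = Rm.FA.graded_seq_carrier[OF f(1), simplified]
    Rm.FA.graded_seq_carrier[OF f'(1), simplified]
    Fn.graded_seq_carrier[OF g(1)] Fn.graded_seq_carrier[OF g'(1)]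
  show "a \<odot>\<^bsub>L n\<^esub> x \<in> carrier (L n)"
    by (simp add: f g L_smult_seq_cls L_carrier Fn.seq_cls_in_gr_carrier graded)
  show "(a \<oplus>\<^bsub>Rg\<^esub> b) \<odot>\<^bsub>L n\<^esub> x = a \<odot>\<^bsub>L n\<^esub> x \<oplus>\<^bsub>L n\<^esub> b \<odot>\<^bsub>L n\<^esub> x"
    using carrs
    by (simp add: f f' g Rg_add L_add Rm.FA.gr_add_seq_cls Fn.gr_add_seq_cls L_smult_seq_cls graded
        Sm.conv_add_left[simplified] cong: seq_cls_cong)
  show "a \<odot>\<^bsub>L n\<^esub> (x \<oplus>\<^bsub>L n\<^esub> y) = a \<odot>\<^bsub>L n\<^esub> x \<oplus>\<^bsub>L n\<^esub> a \<odot>\<^bsub>L n\<^esub> y"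
    using carrs
    by (simp add: f g g' L_add Fn.gr_add_seq_cls L_smult_seq_cls graded Sm.conv_add_right
        cong: seq_cls_cong)
  show "(a \<otimes>\<^bsub>Rg\<^esub> b) \<odot>\<^bsub>L n\<^esub> x = a \<odot>\<^bsub>L n\<^esub> (b \<odot>\<^bsub>L n\<^esub> x)"
    by (simp add: f f' g Rg_mult_seq_cls L_smult_seq_cls graded,
        rule arg_cong[where f = "seq_cls R (F n) m"],
        rule conv_assoc[OF Rm.bilinear_map_axioms Sm.bilinear_map_axioms Sm.bilinear_map_axioms
          Sm.bilinear_map_axioms])
       (use carrs in \<open>simp_all add: Fn.smult_assoc1\<close>)
next
  interpret Fn: filtered_module R "F n" m by (rule filtered_F)
  interpret Sm: filtered_bilinear_map R RM "F n" "F n" "\<lambda>s x. s \<odot>\<^bsub>F n\<^esub> x" m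
    by (rule smult_bilinear)
  have unit: "graded_seq R RM m (single_seq RM 0 \<one>\<^bsub>R\<^esub>)"
    by (rule Rm.FA.graded_seq_single) simp
  fix x assume "x \<in> carrier (L n)"
  then obtain g where g: "graded_seq R (F n) m g" "x = seq_cls R (F n) m g"
    using L_obtain by metis
  show "\<one>\<^bsub>Rg\<^esub> \<odot>\<^bsub>L n\<^esub> x = x"
    using Fn.graded_seq_carrier[OF g(1)]
    by (simp add: g Rg_one L_smult_seq_cls unit Sm.conv_single_left[simplified] cong: seq_cls_cong)
qed

lemma d_hom: "abelian_group_hom (F (Suc n)) (F n) (d (Suc n))"
  by (rule linear_map_abelian_group_hom[OF module module linear_d])

lemma d_mpow: "x \<in> mpow_mod R (F (Suc n)) m i \<Longrightarrow> d (Suc n) x \<in> mpow_mod R (F n) m (Suc i)"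
  using linear_map_mpow[OF module module ideal_subset linear_d minimal] by simp

lemma D_graded_seq:
  assumes f: "graded_seq R (F (Suc n)) m f"
  shows "graded_seq R (F n) m (D n f)"
proof -
  interpret Fn: filtered_module R "F n" m by (rule filtered_F)
  obtain K where K: "\<And>i. i \<ge> K \<Longrightarrow> f i \<in> mpow_mod R (F (Suc n)) m (Suc i)"
    using f unfolding graded_seq_def by blast
  have "D n f k \<in> mpow_mod R (F n) m (Suc k)" if "k \<ge> Suc K" for k
    using that by (cases k) (auto simp: shift_map_def d_mpow K)
  moreover have "D n f k \<in> mpow_mod R (F n) m k" for k
    using f by (cases k) (auto simp: shift_map_def graded_seq_def d_mpow simp del: mpow_mod.simps)
  ultimately show ?thesis unfolding graded_seq_def by (metis (no_types, lifting))
qed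

lemma D_graded_equiv:
  assumes e: "graded_equiv R (F (Suc n)) m f g"
  shows "graded_equiv R (F n) m (D n f) (D n g)"
proof -
  interpret d: abelian_group_hom "F (Suc n)" "F n" "d (Suc n)" by (rule d_hom)
  interpret Fn: filtered_module R "F n" m by (rule filtered_F)
  interpret FS: filtered_module R "F (Suc n)" m by (rule filtered_F)
  have "D n f k \<ominus>\<^bsub>F n\<^esub> D n g k \<in> mpow_mod R (F n) m (Suc k)" for k
  proof (cases k)
    case (Suc j)
    have "f j \<in> carrier (F (Suc n))" "g j \<in> carrier (F (Suc n))"
      using e FS.mpow_in_carrier by (auto simp: graded_equiv_def)
    then have "D n f k \<ominus>\<^bsub>F n\<^esub> D n g k = d (Suc n) (f j \<ominus>\<^bsub>F (Suc n)\<^esub> g j)"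
      by (simp add: Suc shift_map_def d.hom_minus)
    then show ?thesis using e d_mpow Suc by (simp add: graded_equiv_def)
  qed (simp add: shift_map_def a_minus_def Fn.mpow_add Fn.mpow_a_inv)
  moreover have "D n f k \<in> mpow_mod R (F n) m k" "D n g k \<in> mpow_mod R (F n) m k" for k
    using e by (cases k; simp add: shift_map_def graded_equiv_def d_mpow)+
  ultimately show ?thesis unfolding graded_equiv_def by blast
qed

lemma lin_diff_seq_cls:
  assumes f: "graded_seq R (F (Suc n)) m f"
  shows "lin_diff R m F d (Suc n) (seq_cls R (F (Suc n)) m f) = seq_cls R (F n) m (D n f)"
proof -
  have "lin_diff R m F d (Suc n) c = seq_cls R (F n) m (D n (gr_rep R (F (Suc n)) m c))" for c
    by (simp add: lin_diff_def seq_cls_def shift_map_def fun_eq_iff)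
  then show ?thesis
    using filtered_module.graded_equiv_gr_rep[OF filtered_F f]
    by (simp add: D_graded_equiv filtered_module.seq_cls_eqI[OF filtered_F])
qed

lemma D_closed: "(\<And>i. g i \<in> carrier (F (Suc n))) \<Longrightarrow> D n g i \<in> carrier (F n)"
  using linear_d module.axioms(2)[OF module, of n]
  by (simp add: shift_map_def linear_map_def Pi_iff abelian_group.axioms(1) abelian_monoid.zero_closed)

lemma D_conv_smult:
  assumes a: "\<And>i. a i \<in> carrier R" and g: "\<And>i. g i \<in> carrier (F (Suc n))"
  shows "D n (conv (F (Suc n)) (\<lambda>s x. s \<odot>\<^bsub>F (Suc n)\<^esub> x) a g) t
    = conv (F n) (\<lambda>s x. s \<odot>\<^bsub>F n\<^esub> x) a (D n g) t"
proof -
  interpret Fn: module R "F n" by (rule module)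
  interpret d: abelian_group_hom "F (Suc n)" "F n" "d (Suc n)" by (rule d_hom)
  have "D n (conv (F (Suc n)) (\<lambda>s x. s \<odot>\<^bsub>F (Suc n)\<^esub> x) a g) t
      = conv (F n) (\<lambda>x y. \<zero>\<^bsub>F n\<^esub>) (shift_map RM (\<lambda>s. s) a) g t
        \<oplus>\<^bsub>F n\<^esub> conv (F n) (\<lambda>s x. s \<odot>\<^bsub>F n\<^esub> x) a (D n g) t"
    by (rule conv_shift_Leibniz[OF filtered_bilinear_map.axioms(1)[OF smult_bilinear]
          bilinear_map_zero[OF module_ring_module[OF cring] module module]
          filtered_bilinear_map.axioms(1)[OF smult_bilinear] d_hom
          abelian_group_hom_id[OF module.axioms(2)[OF module_ring_module[OF cring]]] d_hom
          abelian_group_hom_id[OF Fn.abelian_group_axioms]])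
       (use a g linear_d in \<open>auto simp: linear_map_def\<close>)
  then show ?thesis
    using bilinear_map.conv_closed[OF filtered_bilinear_map.axioms(1)[OF smult_bilinear], of a "D n g"]
      a g D_closed by (simp add: conv_zero_map[OF Fn.abelian_group_axioms])
qed

lemma linear_lin_diff: "linear_map Rg (L (Suc n)) (L n) (lin_diff R m F d (Suc n))"
  unfolding linear_map_def
proof (intro conjI ballI funcsetI)
  interpret Fn: filtered_module R "F n" m by (rule filtered_F)
  interpret FS: filtered_module R "F (Suc n)" m by (rule filtered_F)
  interpret d: abelian_group_hom "F (Suc n)" "F n" "d (Suc n)" by (rule d_hom)
  interpret Sm: filtered_bilinear_map R RM "F (Suc n)" "F (Suc n)" "\<lambda>s x. s \<odot>\<^bsub>F (Suc n)\<^esub> x" m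
    by (rule smult_bilinear)
  fix x assume "x \<in> carrier (L (Suc n))"
  then obtain f where f: "graded_seq R (F (Suc n)) m f" "x = seq_cls R (F (Suc n)) m f"
    using L_obtain by metis
  show "lin_diff R m F d (Suc n) x \<in> carrier (L n)"
    by (simp add: f lin_diff_seq_cls L_carrier Fn.seq_cls_in_gr_carrier D_graded_seq)
  fix y assume "y \<in> carrier (L (Suc n))"
  then obtain g where g: "graded_seq R (F (Suc n)) m g" "y = seq_cls R (F (Suc n)) m g"
    using L_obtain by metis
  show "lin_diff R m F d (Suc n) (x \<oplus>\<^bsub>L (Suc n)\<^esub> y)
      = lin_diff R m F d (Suc n) x \<oplus>\<^bsub>L n\<^esub> lin_diff R m F d (Suc n) y"
  proof -
    have "D n (\<lambda>i. f i \<oplus>\<^bsub>F (Suc n)\<^esub> g i) k = D n f k \<oplus>\<^bsub>F n\<^esub> D n g k" for k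
      using FS.graded_seq_carrier[OF f(1)] FS.graded_seq_carrier[OF g(1)]
      by (simp add: shift_map_def)
    then show ?thesis
      by (simp add: f g L_add FS.gr_add_seq_cls Fn.gr_add_seq_cls FS.graded_seq_add D_graded_seq
          lin_diff_seq_cls cong: seq_cls_cong)
  qed
next
  interpret Fn: filtered_module R "F n" m by (rule filtered_F)
  interpret FS: filtered_module R "F (Suc n)" m by (rule filtered_F)
  interpret Sm: filtered_bilinear_map R RM "F (Suc n)" "F (Suc n)" "\<lambda>s x. s \<odot>\<^bsub>F (Suc n)\<^esub> x" m
    by (rule smult_bilinear)
  fix a x assume "a \<in> carrier Rg" "x \<in> carrier (L (Suc n))"
  then obtain f g where f: "graded_seq R RM m f" "a = seq_cls R RM m f"
    and g: "graded_seq R (F (Suc n)) m g" "x = seq_cls R (F (Suc n)) m g"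
    using Rg_obtain L_obtain by metis
  show "lin_diff R m F d (Suc n) (a \<odot>\<^bsub>L (Suc n)\<^esub> x) = a \<odot>\<^bsub>L n\<^esub> lin_diff R m F d (Suc n) x"
    using Rm.FA.graded_seq_carrier[OF f(1)] FS.graded_seq_carrier[OF g(1)]
    by (simp add: f g L_smult_seq_cls lin_diff_seq_cls Sm.conv_graded_seq D_graded_seq D_conv_smult
        cong: seq_cls_cong)
qed

lemma lin_diff_lin_diff:
  assumes "x \<in> carrier (L (Suc (Suc n)))"
  shows "lin_diff R m F d (Suc n) (lin_diff R m F d (Suc (Suc n)) x) = \<zero>\<^bsub>L n\<^esub>"
proof -
  obtain f where f: "graded_seq R (F (Suc (Suc n))) m f" "x = seq_cls R (F (Suc (Suc n))) m f"
    using L_obtain assms by metis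
  have "D n (D (Suc n) f) k = \<zero>\<^bsub>F n\<^esub>" for k
    using f abelian_group_hom.hom_zero[OF d_hom] d_d filtered_module.graded_seq_carrier[OF filtered_F]
    by (cases k; cases "k - 1") (auto simp: shift_map_def)
  then show ?thesis
    by (simp add: f lin_diff_seq_cls D_graded_seq L_zero filtered_module.gr_zero_seq_cls[OF filtered_F]
        cong: seq_cls_cong)
qed

abbreviation lin_mu where "lin_mu \<equiv> lin_mult R m F mu"

lemma lin_mult_seq_cls:
  assumes "graded_seq R (F n) m f" "graded_seq R (F k) m g"
  shows "lin_mu n k (seq_cls R (F n) m f) (seq_cls R (F k) m g)
    = seq_cls R (F (n + k)) m (conv (F (n + k)) (mu n k) f g)"
  unfolding lin_mult_def by (rule filtered_bilinear_map.seq_cls_conv[OF mu_filtered_bilinear assms])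

lemma lin_mult_closed:
  assumes "x \<in> carrier (L n)" "y \<in> carrier (L k)"
  shows "lin_mu n k x y \<in> carrier (L (n + k))"
proof -
  obtain f g where f: "graded_seq R (F n) m f" "x = seq_cls R (F n) m f"
    and g: "graded_seq R (F k) m g" "y = seq_cls R (F k) m g"
    using assms L_obtain by metis
  show ?thesis
    by (simp add: f g lin_mult_seq_cls L_carrier filtered_module.seq_cls_in_gr_carrier[OF filtered_F]
        filtered_bilinear_map.conv_graded_seq[OF mu_filtered_bilinear])
qed

lemma lin_mult_add_left:
  assumes "x \<in> carrier (L n)" "x' \<in> carrier (L n)" "y \<in> carrier (L k)"
  shows "lin_mu n k (x \<oplus>\<^bsub>L n\<^esub> x') y = lin_mu n k x y \<oplus>\<^bsub>L (n + k)\<^esub> lin_mu n k x' y"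
proof -
  interpret mu: filtered_bilinear_map R "F n" "F k" "F (n + k)" "mu n k" m by (rule mu_filtered_bilinear)
  obtain f f' g where f: "graded_seq R (F n) m f" "x = seq_cls R (F n) m f"
    and f': "graded_seq R (F n) m f'" "x' = seq_cls R (F n) m f'"
    and g: "graded_seq R (F k) m g" "y = seq_cls R (F k) m g"
    using assms L_obtain by metis
  show ?thesis
    using mu.FA.graded_seq_carrier[OF f(1)] mu.FA.graded_seq_carrier[OF f'(1)]
      mu.FB.graded_seq_carrier[OF g(1)]
    by (simp add: f f' g L_add mu.FA.gr_add_seq_cls mu.FP.gr_add_seq_cls lin_mult_seq_cls
        mu.FA.graded_seq_add mu.conv_graded_seq mu.conv_add_left cong: seq_cls_cong)
qed

lemma lin_mult_add_right:
  assumes "x \<in> carrier (L n)" "y \<in> carrier (L k)" "y' \<in> carrier (L k)"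
  shows "lin_mu n k x (y \<oplus>\<^bsub>L k\<^esub> y') = lin_mu n k x y \<oplus>\<^bsub>L (n + k)\<^esub> lin_mu n k x y'"
proof -
  interpret mu: filtered_bilinear_map R "F n" "F k" "F (n + k)" "mu n k" m by (rule mu_filtered_bilinear)
  obtain f g g' where f: "graded_seq R (F n) m f" "x = seq_cls R (F n) m f"
    and g: "graded_seq R (F k) m g" "y = seq_cls R (F k) m g"
    and g': "graded_seq R (F k) m g'" "y' = seq_cls R (F k) m g'"
    using assms L_obtain by metis
  show ?thesis
    using mu.FA.graded_seq_carrier[OF f(1)] mu.FB.graded_seq_carrier[OF g(1)]
      mu.FB.graded_seq_carrier[OF g'(1)]
    by (simp add: f g g' L_add mu.FB.gr_add_seq_cls mu.FP.gr_add_seq_cls lin_mult_seq_cls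
        mu.FB.graded_seq_add mu.conv_graded_seq mu.conv_add_right cong: seq_cls_cong)
qed

lemma lin_mult_smult_left:
  assumes "a \<in> carrier Rg" "x \<in> carrier (L n)" "y \<in> carrier (L k)"
  shows "lin_mu n k (a \<odot>\<^bsub>L n\<^esub> x) y = a \<odot>\<^bsub>L (n + k)\<^esub> lin_mu n k x y"
proof -
  interpret mu: filtered_bilinear_map R "F n" "F k" "F (n + k)" "mu n k" m by (rule mu_filtered_bilinear)
  note Sm = smult_bilinear[of n] smult_bilinear[of "n + k"]
  obtain h f g where h: "graded_seq R RM m h" "a = seq_cls R RM m h"
    and f: "graded_seq R (F n) m f" "x = seq_cls R (F n) m f"
    and g: "graded_seq R (F k) m g" "y = seq_cls R (F k) m g"
    using assms Rg_obtain L_obtain by metis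
  show ?thesis
    by (simp add: h f g L_smult_seq_cls lin_mult_seq_cls filtered_bilinear_map.conv_graded_seq[OF Sm(1)]
        filtered_bilinear_map.conv_graded_seq[OF mu_filtered_bilinear],
        rule arg_cong[where f = "seq_cls R (F (n + k)) m"],
        rule conv_assoc[OF Sm(1)[THEN filtered_bilinear_map.axioms(1)] mu_bilinear mu_bilinear
          Sm(2)[THEN filtered_bilinear_map.axioms(1)]])
       (use Rm.FA.graded_seq_carrier[OF h(1)] mu.FA.graded_seq_carrier[OF f(1)]
         mu.FB.graded_seq_carrier[OF g(1)] in \<open>simp_all add: mu.smult_left\<close>)
qed

lemma lin_mult_smult_right:
  assumes "a \<in> carrier Rg" "x \<in> carrier (L n)" "y \<in> carrier (L k)"
  shows "lin_mu n k x (a \<odot>\<^bsub>L k\<^esub> y) = a \<odot>\<^bsub>L (n + k)\<^esub> lin_mu n k x y"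
proof -
  interpret mu: filtered_bilinear_map R "F n" "F k" "F (n + k)" "mu n k" m by (rule mu_filtered_bilinear)
  note Sm = smult_bilinear[of k] smult_bilinear[of "n + k"]
  obtain h f g where h: "graded_seq R RM m h" "a = seq_cls R RM m h"
    and f: "graded_seq R (F n) m f" "x = seq_cls R (F n) m f"
    and g: "graded_seq R (F k) m g" "y = seq_cls R (F k) m g"
    using assms Rg_obtain L_obtain by metis
  show ?thesis
    by (simp add: h f g L_smult_seq_cls lin_mult_seq_cls filtered_bilinear_map.conv_graded_seq[OF Sm(1)]
        filtered_bilinear_map.conv_graded_seq[OF mu_filtered_bilinear],
        rule seq_cls_cong,
        rule conv_assoc_swap[OF Sm(1)[THEN filtered_bilinear_map.axioms(1)] mu_bilinear mu_bilinear
          Sm(2)[THEN filtered_bilinear_map.axioms(1)]])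
       (use Rm.FA.graded_seq_carrier[OF h(1)] mu.FA.graded_seq_carrier[OF f(1)]
         mu.FB.graded_seq_carrier[OF g(1)] in \<open>simp_all add: mu.smult_right\<close>)
qed

lemma unit_graded_seq: "graded_seq R (F 0) m (single_seq (F 0) 0 e)"
  by (rule filtered_module.graded_seq_single[OF filtered_F]) (simp add: unit_closed)

lemma lin_mult_unit:
  assumes "x \<in> carrier (L n)"
  shows "lin_mu 0 n (gr_cls R (F 0) m 0 e) x = x" and "lin_mu n 0 x (gr_cls R (F 0) m 0 e) = x"
proof -
  obtain f where f: "graded_seq R (F n) m f" "x = seq_cls R (F n) m f"
    using assms L_obtain by metis
  note carr = filtered_module.graded_seq_carrier[OF filtered_F f(1)]
  have "conv (F (0 + n)) (mu 0 n) (single_seq (F 0) 0 e) f = f"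
    by (rule ext)
       (simp add: bilinear_map.conv_single_left[OF mu_bilinear unit_closed carr, simplified] carr mu_unit)
  then show "lin_mu 0 n (gr_cls R (F 0) m 0 e) x = x"
    by (simp add: f gr_cls_seq_cls lin_mult_seq_cls unit_graded_seq)
  have "conv (F (n + 0)) (mu n 0) f (single_seq (F 0) 0 e) = f"
    by (rule ext)
       (simp add: bilinear_map.conv_single_right[OF mu_bilinear unit_closed carr, simplified] carr mu_unit)
  then show "lin_mu n 0 x (gr_cls R (F 0) m 0 e) = x"
    by (simp add: f gr_cls_seq_cls lin_mult_seq_cls unit_graded_seq)
qed

lemma lin_mult_assoc:
  assumes "x \<in> carrier (L n)" "y \<in> carrier (L k)" "z \<in> carrier (L l)"
  shows "lin_mu (n + k) l (lin_mu n k x y) z = lin_mu n (k + l) x (lin_mu k l y z)"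
proof -
  obtain f g h where f: "graded_seq R (F n) m f" "x = seq_cls R (F n) m f"
    and g: "graded_seq R (F k) m g" "y = seq_cls R (F k) m g"
    and h: "graded_seq R (F l) m h" "z = seq_cls R (F l) m h"
    using assms L_obtain by metis
  note carr = filtered_module.graded_seq_carrier[OF filtered_F]
  have b3: "bilinear_map R (F (n + k)) (F l) (F (n + (k + l))) (mu (n + k) l)"
    using mu_bilinear[of "n + k" l] by (simp add: add.assoc)
  show ?thesis
    by (simp add: f g h lin_mult_seq_cls filtered_bilinear_map.conv_graded_seq[OF mu_filtered_bilinear],
        simp only: add.assoc, rule arg_cong[where f = "seq_cls R (F (n + (k + l))) m"],
        rule conv_assoc[OF mu_bilinear mu_bilinear b3 mu_bilinear])
       (use carr[OF f(1)] carr[OF g(1)] carr[OF h(1)] in \<open>simp_all add: mu_assoc\<close>)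
qed

lemma sgn_hom: "abelian_group_hom (F j) (F j) (sgn_mod (F j) s)"
  by (cases "even s")
     (simp_all add: sgn_mod_def[abs_def] abelian_group_hom_id abelian_group_hom_a_inv
       module.axioms(2)[OF module])

lemma L_a_inv_seq_cls:
  assumes f: "graded_seq R (F j) m f"
  shows "\<ominus>\<^bsub>L j\<^esub> seq_cls R (F j) m f = seq_cls R (F j) m (\<lambda>i. \<ominus>\<^bsub>F j\<^esub> f i)"
proof -
  interpret Fj: filtered_module R "F j" m by (rule filtered_F)
  interpret Lj: abelian_group "L j" by (rule module.axioms(2)[OF module_L])
  have "seq_cls R (F j) m (\<lambda>i. \<ominus>\<^bsub>F j\<^esub> f i) \<oplus>\<^bsub>L j\<^esub> seq_cls R (F j) m f = \<zero>\<^bsub>L j\<^esub>"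
    using Fj.graded_seq_carrier[OF f]
    by (simp add: L_add L_zero f Fj.gr_add_seq_cls Fj.graded_seq_a_inv Fj.gr_zero_seq_cls Fj.l_neg
        cong: seq_cls_cong)
  then show ?thesis
    by (rule Lj.minus_equality) (simp_all add: L_carrier f Fj.seq_cls_in_gr_carrier Fj.graded_seq_a_inv)
qed

lemma L_sgn_seq_cls:
  "graded_seq R (F j) m f \<Longrightarrow>
    sgn_mod (L j) s (seq_cls R (F j) m f) = seq_cls R (F j) m (\<lambda>i. sgn_mod (F j) s (f i))"
  by (simp add: sgn_mod_def L_a_inv_seq_cls)

lemma sgn_graded_seq: "graded_seq R (F j) m f \<Longrightarrow> graded_seq R (F j) m (\<lambda>i. sgn_mod (F j) s (f i))"
  by (cases "even s") (simp_all add: sgn_mod_def filtered_module.graded_seq_a_inv[OF filtered_F])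

lemma lin_mult_comm:
  assumes "x \<in> carrier (L n)" "y \<in> carrier (L k)"
  shows "lin_mu n k x y = sgn_mod (L (n + k)) (n * k) (lin_mu k n y x)"
proof -
  obtain f g where f: "graded_seq R (F n) m f" "x = seq_cls R (F n) m f"
    and g: "graded_seq R (F k) m g" "y = seq_cls R (F k) m g"
    using assms L_obtain by metis
  note carr = filtered_module.graded_seq_carrier[OF filtered_F]
  have b': "filtered_bilinear_map R (F k) (F n) (F (n + k)) (mu k n) m"
    using mu_filtered_bilinear[of k n] by (simp add: add.commute)
  show ?thesis
    by (simp add: f g lin_mult_seq_cls add.commute[of k n] L_sgn_seq_cls
        filtered_bilinear_map.conv_graded_seq[OF b'],
        rule seq_cls_cong, rule conv_comm[OF mu_bilinear b'[THEN filtered_bilinear_map.axioms(1)] sgn_hom])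
       (use carr[OF f(1)] carr[OF g(1)] in \<open>simp_all add: mu_comm[of _ n _ k]\<close>)
qed

lemma lin_mult_odd_square:
  assumes n: "odd n" and x: "x \<in> carrier (L n)"
  shows "lin_mu n n x x = \<zero>\<^bsub>L (n + n)\<^esub>"
proof -
  interpret Fnn: filtered_module R "F (n + n)" m by (rule filtered_F)
  obtain f where f: "graded_seq R (F n) m f" "x = seq_cls R (F n) m f"
    using x L_obtain by metis
  note carr = filtered_module.graded_seq_carrier[OF filtered_F f(1)]
  have "conv (F (n + n)) (mu n n) f f t = \<zero>\<^bsub>F (n + n)\<^esub>" for t
    unfolding conv_def atLeast0AtMost[symmetric]
  proof (rule Fnn.finsum_antisym_zero)
    fix i assume i: "i \<in> {0..t}"
    have "mu n n (f (t - i)) (f i) = sgn_mod (F (n + n)) (n * n) (mu n n (f i) (f (t - i)))"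
      by (rule mu_comm[OF carr carr])
    then show "mu n n (f (0 + t - i)) (f (t - (0 + t - i))) = \<ominus>\<^bsub>F (n + n)\<^esub> mu n n (f i) (f (t - i))"
      using i n by (simp add: sgn_mod_def)
    assume "2 * i = 0 + t"
    then have "t - i = i" by simp
    then show "mu n n (f i) (f (t - i)) = \<zero>\<^bsub>F (n + n)\<^esub>"
      using mu_odd_square[OF n carr] by simp
  qed (simp add: bilinear_map.closed[OF mu_bilinear] carr)
  then show ?thesis
    by (simp add: f lin_mult_seq_cls L_zero Fnn.gr_zero_seq_cls cong: seq_cls_cong)
qed

lemma lin_mult_gr_cls:
  assumes x: "x \<in> mpow_mod R (F n) m i" and y: "y \<in> mpow_mod R (F k) m j"
  shows "lin_mu n k (gr_cls R (F n) m i x) (gr_cls R (F k) m j y)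
    = gr_cls R (F (n + k)) m (i + j) (mu n k x y)"
proof -
  interpret mu: filtered_bilinear_map R "F n" "F k" "F (n + k)" "mu n k" m by (rule mu_filtered_bilinear)
  have carr: "x \<in> carrier (F n)" "\<And>i. single_seq (F k) j y i \<in> carrier (F k)"
    using x y mu.FA.mpow_in_carrier mu.FB.mpow_in_carrier by (auto simp: single_seq_def)
  then have "conv (F (n + k)) (mu n k) (single_seq (F n) i x) (single_seq (F k) j y)
      = single_seq (F (n + k)) (i + j) (mu n k x y)"
    by (intro ext) (simp add: mu.conv_single_left, auto simp: single_seq_def)
  then show ?thesis
    by (simp add: gr_cls_seq_cls lin_mult_seq_cls mu.FA.graded_seq_single mu.FB.graded_seq_single x y)
qed

lemma D_conv_mu:
  assumes nk: "n + k = Suc p"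
    and f: "\<And>i. f i \<in> carrier (F n)" and g: "\<And>i. g i \<in> carrier (F k)"
  shows "D p (conv (F (Suc p)) (mu n k) f g) t =
      (if n = 0 then \<zero>\<^bsub>F p\<^esub> else conv (F p) (mu (n - 1) k) (D (n - 1) f) g t) \<oplus>\<^bsub>F p\<^esub>
      (if k = 0 then \<zero>\<^bsub>F p\<^esub> else sgn_mod (F p) n (conv (F p) (mu n (k - 1)) f (D (k - 1) g) t))"
proof -
  txt \<open>The boundary cases \<open>n = 0\<close> and \<open>k = 0\<close> become zero maps and identities, so one
    application of \<open>conv_shift_Leibniz\<close> covers all cases.\<close>
  define \<beta>A where "\<beta>A = (if n = 0 then (\<lambda>x y. \<zero>\<^bsub>F p\<^esub>) else mu (n - 1) k)"
  define DA where "DA = (if n = 0 then (\<lambda>x. x) else d n)"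
  define \<beta>B where "\<beta>B = (if k = 0 then (\<lambda>x y. \<zero>\<^bsub>F p\<^esub>) else mu n (k - 1))"
  define DB where "DB = (if k = 0 then (\<lambda>x. x) else d k)"
  note ag = module.axioms(2)[OF module]
  have \<beta>: "bilinear_map R (F n) (F k) (F (Suc p)) (mu n k)"
    using mu_bilinear[of n k] nk by simp
  have \<beta>A: "bilinear_map R (F (n - 1)) (F k) (F p) \<beta>A"
    using mu_bilinear[of "n - 1" k] nk by (cases n) (simp_all add: \<beta>A_def bilinear_map_zero module)
  have \<beta>B: "bilinear_map R (F n) (F (k - 1)) (F p) \<beta>B"
    using mu_bilinear[of n "k - 1"] nk by (cases k) (simp_all add: \<beta>B_def bilinear_map_zero module)
  have DA: "abelian_group_hom (F n) (F (n - 1)) DA"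
    by (cases n) (simp_all add: DA_def abelian_group_hom_id ag d_hom)
  have DB: "abelian_group_hom (F k) (F (k - 1)) DB"
    by (cases k) (simp_all add: DB_def abelian_group_hom_id ag d_hom)
  interpret \<sigma>: abelian_group_hom "F p" "F p" "sgn_mod (F p) n" by (rule sgn_hom)
  have "D p (conv (F (Suc p)) (mu n k) f g) t = conv (F p) \<beta>A (shift_map (F (n - 1)) DA f) g t
      \<oplus>\<^bsub>F p\<^esub> sgn_mod (F p) n (conv (F p) \<beta>B f (shift_map (F (k - 1)) DB g) t)"
  proof (rule conv_shift_Leibniz[OF \<beta> \<beta>A \<beta>B d_hom DA DB sgn_hom _ f g])
    fix x y assume x: "x \<in> carrier (F n)" and y: "y \<in> carrier (F k)"
    have p: "n + k - 1 = p" and pos: "0 < n + k" using nk by simp_all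
    show "d (Suc p) (mu n k x y) = \<beta>A (DA x) y \<oplus>\<^bsub>F p\<^esub> sgn_mod (F p) n (\<beta>B x (DB y))"
      using Leibniz[OF pos x y, unfolded p, unfolded nk] nk by (simp add: \<beta>A_def DA_def \<beta>B_def DB_def)
  qed
  then show ?thesis
    using nk ag[of p] ag[THEN abelian_group.axioms(1)]
    by (cases n; cases k) (simp_all add: \<beta>A_def DA_def \<beta>B_def DB_def conv_zero_map sgn_mod_def
        abelian_group.a_inv_zero abelian_monoid.l_zero abelian_monoid.zero_closed)
qed

lemma lin_mult_Leibniz:
  assumes nk: "0 < n + k" and x: "x \<in> carrier (L n)" and y: "y \<in> carrier (L k)"
  shows "lin_diff R m F d (n + k) (lin_mu n k x y) =
     (if n = 0 then \<zero>\<^bsub>L (n + k - 1)\<^esub> else lin_mu (n - 1) k (lin_diff R m F d n x) y)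
     \<oplus>\<^bsub>L (n + k - 1)\<^esub>
     (if k = 0 then \<zero>\<^bsub>L (n + k - 1)\<^esub>
      else sgn_mod (L (n + k - 1)) n (lin_mu n (k - 1) x (lin_diff R m F d k y)))"
proof -
  obtain p where p: "n + k = Suc p" using nk by (metis gr0_conv_Suc)
  interpret Fp: filtered_module R "F p" m by (rule filtered_F)
  obtain f g where f: "graded_seq R (F n) m f" "x = seq_cls R (F n) m f"
    and g: "graded_seq R (F k) m g" "y = seq_cls R (F k) m g"
    using x y L_obtain by metis
  note carr = filtered_module.graded_seq_carrier[OF filtered_F]
  note graded = filtered_bilinear_map.conv_graded_seq[OF mu_filtered_bilinear] D_graded_seq
  define left where "left = (\<lambda>t. if n = 0 then \<zero>\<^bsub>F p\<^esub> else conv (F p) (mu (n - 1) k) (D (n - 1) f) g t)"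
  define right where "right = (\<lambda>t. if k = 0 then \<zero>\<^bsub>F p\<^esub>
    else sgn_mod (F p) n (conv (F p) (mu n (k - 1)) f (D (k - 1) g) t))"
  have left: "(if n = 0 then \<zero>\<^bsub>L p\<^esub> else lin_mu (n - 1) k (lin_diff R m F d n x) y) = seq_cls R (F p) m left
      \<and> graded_seq R (F p) m left"
    using p f g by (cases n) (auto simp: left_def L_zero Fp.gr_zero_seq_cls Fp.graded_seq_zero
        lin_diff_seq_cls lin_mult_seq_cls graded)
  have right: "(if k = 0 then \<zero>\<^bsub>L p\<^esub> else sgn_mod (L p) n (lin_mu n (k - 1) x (lin_diff R m F d k y)))
      = seq_cls R (F p) m right \<and> graded_seq R (F p) m right"
    using p f g by (cases k) (auto simp: right_def L_zero Fp.gr_zero_seq_cls Fp.graded_seq_zero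
        lin_diff_seq_cls lin_mult_seq_cls graded L_sgn_seq_cls sgn_graded_seq)
  have "D p (conv (F (Suc p)) (mu n k) f g) t = left t \<oplus>\<^bsub>F p\<^esub> right t" for t
    unfolding left_def right_def by (rule D_conv_mu[OF p carr[OF f(1)] carr[OF g(1)]])
  moreover have "graded_seq R (F (Suc p)) m (conv (F (Suc p)) (mu n k) f g)"
    using graded(1)[OF f(1) g(1)] p by simp
  ultimately have lhs:
    "lin_diff R m F d (n + k) (lin_mu n k x y) = seq_cls R (F p) m (\<lambda>t. left t \<oplus>\<^bsub>F p\<^esub> right t)"
    unfolding f g lin_mult_seq_cls[OF f(1) g(1)] p by (simp add: lin_diff_seq_cls cong: seq_cls_cong)
  have p': "n + k - 1 = p" using p by simp
  show ?thesis
    unfolding p' lhs left[THEN conjunct1] right[THEN conjunct1] L_add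
    using left right by (simp add: Fp.gr_add_seq_cls)
qed

lemma unit_in_L: "gr_cls R (F 0) m 0 e \<in> carrier (L 0)"
  unfolding gr_cls_seq_cls L_carrier
  by (rule filtered_module.seq_cls_in_gr_carrier[OF filtered_F unit_graded_seq])

theorem dg_algebra_linear_part:
  "dg_algebra Rg L (lin_diff R m F d) (lin_mult R m F mu) (gr_cls R (F 0) m 0 e)"
  unfolding dg_algebra_def
  by (intro conjI allI ballI impI)
     (fact cring_Rg module_L linear_lin_diff lin_diff_lin_diff lin_mult_closed
       lin_mult_add_left lin_mult_add_right lin_mult_smult_left lin_mult_smult_right unit_in_L
       lin_mult_unit lin_mult_assoc lin_mult_comm lin_mult_odd_square lin_mult_Leibniz)+

end

theorem lemma2p4:
  fixes R :: "('r, 'c) ring_scheme" and m :: "'r set"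
    and F :: "nat \<Rightarrow> ('r, 'f) module" and d :: "nat \<Rightarrow> 'f \<Rightarrow> 'f"
    and mu :: "nat \<Rightarrow> nat \<Rightarrow> 'f \<Rightarrow> 'f \<Rightarrow> 'f" and e :: 'f
  assumes "noetherian_local R m"
    and "minimal_tate_resolution R m F d mu e"
  shows "\<exists>mu'. dg_algebra (assoc_graded R m) (lin_mod R m F) (lin_diff R m F d) mu'
                  (gr_cls R (F 0) m 0 e) \<and>
           (\<forall>n k i j x y. x \<in> mpow_mod R (F n) m i \<longrightarrow> y \<in> mpow_mod R (F k) m j \<longrightarrow>
              mu' n k (gr_cls R (F n) m i x) (gr_cls R (F k) m j y)
                = gr_cls R (F (n + k)) m (i + j) (mu n k x y))"
proof -
  have "maximalideal m R"
    using assms(1) by (simp add: noetherian_local_def)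
  then have "m \<subseteq> carrier R"
    by (rule additive_subgroup.a_subset[OF ideal.axioms(1)[OF maximalideal.axioms(1)]])
  moreover have "dg_algebra R F d mu e" and "\<And>n. d (Suc n) ` carrier (F (Suc n)) \<subseteq> mpow_mod R (F n) m 1"
    using assms(2) by (auto simp: minimal_tate_resolution_def minimal_free_resolution_def)
  ultimately interpret minimal_dg_algebra R m F d mu e
    by unfold_locales
  show ?thesis
    by (intro exI[of _ "lin_mult R m F mu"] conjI allI impI dg_algebra_linear_part lin_mult_gr_cls)
qed

end
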